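(* Let $\ell:[a,b]\to\Lambda(n)$ be a $C^k$ path of Lagrangian planes, $\ell_*\in\Lambda(n)$ a reference plane, $j\le k$, and let $t_0\in(a,b)$ be an isolated crossing ($\ell(t_0)\cap\ell_*\ne\{0\}$ and $\ell(t)\cap\ell_*=\{0\}$ for $t\neq t_0$ near $t_0$). Suppose the crossing forms satisfy $Q^{(i)}(v)=0$ for all $v\in\ell(t_0)\cap\ell_*$ and $i=1,\dots,j-1$, and $Q^{(j)}$ restricted to $\ell(t_0)\cap\ell_*$ is nondegenerate. Then there exists $\delta>0$ such that: (i) if $j$ is even, $\mathrm{Mas}(\ell,\ell_*;|t-t_0|<\delta)=0$; (ii) if $j$ is odd, $\mathrm{Mas}(\ell,\ell_*;|t-t_0|<\delta)=\mathrm{sign}\,Q^{(j)}|_{\ell(t_0)\cap\ell_*}$.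
   Context: $\mathbb R^{2n}$ has symplectic form $\omega(u,v)=\langle u,Jv\rangle$, $J=\begin{pmatrix}0&I_n\\-I_n&0\end{pmatrix}$; $\Lambda(n)$ is the set of Lagrangian planes. Let $\mathcal W\in\Lambda(n)$ with $\mathcal W\cap\ell(t_0)=\{0\}$ and for $t$ near $t_0$ let $A(t):\ell(t_0)\to\mathcal W$ be the graph map, i.e. the unique linear map with $\ell(t)=\{v+A(t)v:v\in\ell(t_0)\}$. The $j$-th order crossing form is $Q^{(j)}(v)=\frac{d^j}{dt^j}\omega(v,A(t)v)|_{t=t_0}$ for $v\in\ell(t_0)\cap\ell_*$ (independent of $\mathcal W$). Let $\Pi$ be the orthogonal projection of $\mathbb R^{2n}$ onto $\ell(t_0)\cap\ell_*$; then $\Pi JA(t)\Pi$ is a symmetric matrix. For an isolated crossing $t_0$ and small $\delta>0$, the Maslov index is given by the spectral flow formula $\mathrm{Mas}(\ell,\ell_*;|t-t_0|\le\delta)=\tfrac12\mathrm{sign}\big(\Pi JA(t_0+\delta)\Pi\big)-\tfrac12\mathrm{sign}\big(\Pi JA(t_0-\delta)\Pi\big)$, where sign is number of positive minus number of negative eigenvalues. *)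

theory Defs
  imports "HOL-Analysis.Analysis"
begin

text \<open>Phase space R^{2n} is modelled as real^'n \<times> real^'n, a vector being (x,y) with
  x,y in R^n; the inner product is the Euclidean one.\<close>

type_synonym 'n phase = "(real^'n) \<times> (real^'n)"

text \<open>J = [[0, I],[-I, 0]], i.e. J(x,y) = (y,-x).\<close>
definition symJ :: "'n::finite phase \<Rightarrow> 'n phase" where
  "symJ v = (snd v, - fst v)"

definition omega :: "'n::finite phase \<Rightarrow> 'n phase \<Rightarrow> real" where
  "omega u v = u \<bullet> symJ v"

definition lagrangian :: "'n::finite phase set \<Rightarrow> bool" where
  "lagrangian L \<longleftrightarrow> subspace L \<and> dim L = CARD('n) \<and> (\<forall>u\<in>L. \<forall>v\<in>L. omega u v = 0)"

text \<open>C^k real function on a set S (one-sided derivatives at boundary points of S).\<close>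
definition Ck_on :: "nat \<Rightarrow> real set \<Rightarrow> (real \<Rightarrow> real) \<Rightarrow> bool" where
  "Ck_on k S f \<longleftrightarrow> (\<exists>D. D 0 = f \<and>
      (\<forall>i<k. \<forall>t\<in>S. (D i has_real_derivative D (Suc i) t) (at t within S)) \<and>
      continuous_on S (D k))"

definition lagr_path_Ck :: "nat \<Rightarrow> real \<Rightarrow> real \<Rightarrow> (real \<Rightarrow> 'n::finite phase set) \<Rightarrow> bool" where
  "lagr_path_Ck k a b l \<longleftrightarrow>
     (\<forall>t\<in>{a..b}. lagrangian (l t)) \<and>
     (\<exists>X :: real \<Rightarrow> 'n \<Rightarrow> 'n phase.
        (\<forall>t\<in>{a..b}. l t = span (range (X t))) \<and>
        (\<forall>i. \<forall>e\<in>(Basis :: 'n phase set). Ck_on k {a..b} (\<lambda>t. X t i \<bullet> e)))"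

definition isolated_crossing :: "(real \<Rightarrow> 'n::finite phase set) \<Rightarrow> 'n phase set \<Rightarrow> real \<Rightarrow> bool" where
  "isolated_crossing l Ls t0 \<longleftrightarrow> l t0 \<inter> Ls \<noteq> {0} \<and>
     (\<exists>e>0. \<forall>t. 0 < \<bar>t - t0\<bar> \<and> \<bar>t - t0\<bar> < e \<longrightarrow> l t \<inter> Ls = {0})"

definition graph_map :: "'n::finite phase set \<Rightarrow> (real \<Rightarrow> 'n phase set) \<Rightarrow> real \<Rightarrow> 'n phase \<Rightarrow> 'n phase" where
  "graph_map W l t v = (THE w. w \<in> W \<and> v + w \<in> l t)"

definition crossing_form :: "'n::finite phase set \<Rightarrow> (real \<Rightarrow> 'n phase set) \<Rightarrow> real \<Rightarrow> nat \<Rightarrow> 'n phase \<Rightarrow> real" where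
  "crossing_form W l t0 j v = (deriv ^^ j) (\<lambda>t. omega v (graph_map W l t v)) t0"

definition qf_bilin :: "('a::real_vector \<Rightarrow> real) \<Rightarrow> 'a \<Rightarrow> 'a \<Rightarrow> real" where
  "qf_bilin q u w = (q (u + w) - q u - q w) / 2"

definition qf_nondegenerate :: "('a::real_vector \<Rightarrow> real) \<Rightarrow> 'a set \<Rightarrow> bool" where
  "qf_nondegenerate q V \<longleftrightarrow> (\<forall>u\<in>V. (\<forall>w\<in>V. qf_bilin q u w = 0) \<longrightarrow> u = 0)"

definition qf_pos_index :: "('a::euclidean_space \<Rightarrow> real) \<Rightarrow> 'a set \<Rightarrow> nat" where
  "qf_pos_index q V = Max {dim U | U. subspace U \<and> U \<subseteq> V \<and> (\<forall>u\<in>U. u \<noteq> 0 \<longrightarrow> q u > 0)}"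

definition qf_neg_index :: "('a::euclidean_space \<Rightarrow> real) \<Rightarrow> 'a set \<Rightarrow> nat" where
  "qf_neg_index q V = Max {dim U | U. subspace U \<and> U \<subseteq> V \<and> (\<forall>u\<in>U. u \<noteq> 0 \<longrightarrow> q u < 0)}"

definition qf_signature :: "('a::euclidean_space \<Rightarrow> real) \<Rightarrow> 'a set \<Rightarrow> int" where
  "qf_signature q V = int (qf_pos_index q V) - int (qf_neg_index q V)"

definition eig_count :: "('a::euclidean_space \<Rightarrow> 'a) \<Rightarrow> (real \<Rightarrow> bool) \<Rightarrow> nat" where
  "eig_count f P = (\<Sum>c\<in>{c. P c \<and> (\<exists>x. x \<noteq> 0 \<and> f x = c *\<^sub>R x)}. dim {x. f x = c *\<^sub>R x})"

definition op_signature :: "('a::euclidean_space \<Rightarrow> 'a) \<Rightarrow> int" where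
  "op_signature f = int (eig_count f (\<lambda>c. c > 0)) - int (eig_count f (\<lambda>c. c < 0))"

definition orth_proj :: "'a::euclidean_space set \<Rightarrow> 'a \<Rightarrow> 'a" where
  "orth_proj V = closest_point V"

definition crossing_op :: "'n::finite phase set \<Rightarrow> (real \<Rightarrow> 'n phase set) \<Rightarrow> 'n phase set \<Rightarrow> real \<Rightarrow> real \<Rightarrow> 'n phase \<Rightarrow> 'n phase" where
  "crossing_op W l Ls t0 t x =
     orth_proj (l t0 \<inter> Ls) (symJ (graph_map W l t (orth_proj (l t0 \<inter> Ls) x)))"

text \<open>Maslov index of l relative to Ls on the interval |t - t0| < delta around an isolated
  crossing, via the spectral flow formula.\<close>
definition maslov_local :: "'n::finite phase set \<Rightarrow> (real \<Rightarrow> 'n phase set) \<Rightarrow> 'n phase set \<Rightarrow> real \<Rightarrow> real \<Rightarrow> real" where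
  "maslov_local W l Ls t0 \<delta> =
     real_of_int (op_signature (crossing_op W l Ls t0 (t0 + \<delta>))) / 2
   - real_of_int (op_signature (crossing_op W l Ls t0 (t0 - \<delta>))) / 2"

end

theory Submission
  imports Defs
begin

text \<open>Near \<open>t0\<close> the plane \<open>l t\<close> is the graph of a linear map \<open>A(t) : l t0 \<rightarrow> W\<close>, and
  \<open>(u, v) \<mapsto> \<omega>(u, A(t) v)\<close> is a symmetric form on \<open>l t0\<close> whose \<open>i\<close>-th derivative at \<open>t0\<close>
  polarises the crossing form \<open>Q\<^sup>(\<^sup>i\<^sup>)\<close>. The derivatives of order below \<open>j\<close> vanish on
  \<open>V = l t0 \<inter> Ls\<close>, so by Taylor's theorem the form equals \<open>(t - t0)\<^sup>j / j! \<cdot> Q\<^sup>(\<^sup>j\<^sup>)\<close> on \<open>V\<close>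
  up to an error \<open>o(|t - t0|\<^sup>j)\<close>, uniformly on the unit sphere. A nondegenerate form keeps its
  signature under perturbations that are small compared with its smallest eigenvalue, and
  the signature of \<open>\<Pi> J A(t) \<Pi>\<close> is that of \<open>v \<mapsto> \<omega>(v, A(t) v)\<close> on \<open>V\<close>. Hence at \<open>t0 \<plusminus> \<delta>\<close> the
  signature is \<open>sign((\<plusminus>\<delta>)\<^sup>j) \<cdot> sign Q\<^sup>(\<^sup>j\<^sup>)\<close>: the two halves of the spectral flow formula
  cancel for even \<open>j\<close> and add up to \<open>sign Q\<^sup>(\<^sup>j\<^sup>)\<close> for odd \<open>j\<close>.\<close>

section \<open>Orthonormal bases\<close>

definition onb :: "'a::euclidean_space set \<Rightarrow> 'a set \<Rightarrow> bool" where
  "onb E V \<longleftrightarrow> finite E \<and> E \<subseteq> V \<and> pairwise orthogonal E \<and> (\<forall>e\<in>E. norm e = 1) \<and> span E = V"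

lemma onbD:
  assumes "onb E V"
  shows "finite E" "E \<subseteq> V" "subspace V" "span E = V" "\<And>e. e \<in> E \<Longrightarrow> e \<bullet> e = 1"
    and "\<And>e f. e \<in> E \<Longrightarrow> f \<in> E \<Longrightarrow> e \<noteq> f \<Longrightarrow> e \<bullet> f = 0"
  using assms subspace_span[of E] unfolding onb_def pairwise_def orthogonal_def
  by (simp_all add: norm_eq_1)

lemma onb_exists:
  assumes "subspace V"
  obtains E where "onb E V"
proof -
  obtain B where "B \<subseteq> V" "pairwise orthogonal B" "\<And>x. x \<in> B \<Longrightarrow> norm x = 1"
    "independent B" "span B = V"
    using orthonormal_basis_subspace[OF assms] by metis
  then show ?thesis using that independent_imp_finite unfolding onb_def by blast
qed

lemma onb_inner_sum:
  assumes "onb E V" "f \<in> E"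
  shows "(\<Sum>e\<in>E. c e *\<^sub>R e) \<bullet> f = c f"
proof -
  have "(\<Sum>e\<in>E. c e *\<^sub>R e) \<bullet> f = (\<Sum>e\<in>E. if e = f then c f else 0)"
    unfolding inner_sum_left using onbD(5,6)[OF assms(1)] assms(2)
    by (intro sum.cong) auto
  then show ?thesis using onbD(1)[OF assms(1)] assms(2) by simp
qed

lemma onb_sum_in:
  assumes "onb E V"
  shows "(\<Sum>e\<in>E. c e *\<^sub>R e) \<in> V"
proof -
  have "(\<Sum>e\<in>E. c e *\<^sub>R e) \<in> span E" by (intro span_sum span_scale span_base)
  then show ?thesis using onbD(4)[OF assms] by simp
qed

lemma onb_residual_orthogonal:
  assumes "onb E V" "y \<in> V"
  shows "(x - (\<Sum>e\<in>E. (x \<bullet> e) *\<^sub>R e)) \<bullet> y = 0"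
proof -
  have "orthogonal (x - (\<Sum>e\<in>E. (x \<bullet> e) *\<^sub>R e)) y"
  proof (rule orthogonal_to_span)
    show "y \<in> span E" using assms onbD(4) by blast
    show "orthogonal (x - (\<Sum>e\<in>E. (x \<bullet> e) *\<^sub>R e)) f" if "f \<in> E" for f
      using onb_inner_sum[OF assms(1) that, of "\<lambda>e. x \<bullet> e"]
      by (simp add: orthogonal_def inner_diff_left)
  qed
  then show ?thesis by (simp add: orthogonal_def)
qed

lemma onb_expand:
  assumes "onb E V" "v \<in> V"
  shows "v = (\<Sum>e\<in>E. (v \<bullet> e) *\<^sub>R e)"
proof -
  let ?r = "v - (\<Sum>e\<in>E. (v \<bullet> e) *\<^sub>R e)"
  have "?r \<in> V"
    using assms onb_sum_in[OF assms(1)] by (intro subspace_diff[OF onbD(3)[OF assms(1)]])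
  then have "?r \<bullet> ?r = 0" using onb_residual_orthogonal[OF assms(1)] by blast
  then show ?thesis by simp
qed

lemma onb_inner_self:
  assumes "onb E V" "v \<in> V"
  shows "v \<bullet> v = (\<Sum>e\<in>E. (v \<bullet> e)\<^sup>2)"
proof -
  have "v \<bullet> v = v \<bullet> (\<Sum>e\<in>E. (v \<bullet> e) *\<^sub>R e)" using onb_expand[OF assms] by simp
  then show ?thesis by (simp add: inner_sum_right power2_eq_square)
qed

lemma onb_independent: "onb E V \<Longrightarrow> independent E"
  unfolding onb_def by (intro pairwise_orthogonal_independent) auto

lemma onb_card: "onb E V \<Longrightarrow> card E = dim V"
  using onb_independent[of E V] unfolding onb_def by (intro basis_card_eq_dim) auto

lemma onb_dim_span_subset: "onb E V \<Longrightarrow> F \<subseteq> E \<Longrightarrow> dim (span F) = card F"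
  using onb_independent[of E V] independent_mono[of E F] by (simp add: dim_span dim_eq_card_independent)

lemma onb_span_subset: "onb E V \<Longrightarrow> F \<subseteq> E \<Longrightarrow> span F \<subseteq> V"
  using onbD(4)[of E V] span_mono[of F E] by simp

lemma onb_subset:
  assumes "onb E V" "F \<subseteq> E"
  shows "onb F (span F)"
  using assms finite_subset pairwise_subset unfolding onb_def by (auto intro: span_base)

lemma orth_proj_onb:
  fixes V :: "'a::euclidean_space set"
  assumes "onb E V"
  shows "orth_proj V x = (\<Sum>e\<in>E. (x \<bullet> e) *\<^sub>R e)"
proof -
  let ?p = "\<Sum>e\<in>E. (x \<bullet> e) *\<^sub>R e"
  have sub: "subspace V" by (rule onbD(3)[OF assms])
  have pV: "?p \<in> V" by (rule onb_sum_in[OF assms])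
  have "\<forall>z\<in>V. dist x ?p \<le> dist x z"
  proof
    fix z assume zV: "z \<in> V"
    have "?p - z \<in> V" using pV zV sub by (simp add: subspace_diff)
    then have orth: "(x - ?p) \<bullet> (?p - z) = 0" by (rule onb_residual_orthogonal[OF assms])
    have pyth: "\<And>a b::'a. a \<bullet> b = 0 \<Longrightarrow> (a + b) \<bullet> (a + b) = a \<bullet> a + b \<bullet> b"
      by (simp add: inner_add_left inner_add_right inner_commute)
    have "x - z = (x - ?p) + (?p - z)" by simp
    then have "(x - z) \<bullet> (x - z) = (x - ?p) \<bullet> (x - ?p) + (?p - z) \<bullet> (?p - z)"
      using pyth[OF orth] by simp
    then have "(x - ?p) \<bullet> (x - ?p) \<le> (x - z) \<bullet> (x - z)" by simp
    then have "norm (x - ?p) \<le> norm (x - z)" by (simp add: norm_le)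
    then show "dist x ?p \<le> dist x z" by (simp add: dist_norm)
  qed
  then have "?p = closest_point V x"
    by (intro closest_point_unique subspace_imp_convex sub closed_subspace pV)
  then show ?thesis unfolding orth_proj_def by simp
qed

lemma orth_proj_properties:
  fixes V :: "'a::euclidean_space set"
  assumes "subspace V"
  shows "linear (orth_proj V)" "orth_proj V x \<in> V" "u \<in> V \<Longrightarrow> u \<bullet> orth_proj V y = u \<bullet> y"
    and "v \<in> V \<Longrightarrow> orth_proj V v = v"
proof -
  obtain E where E: "onb E V" using onb_exists[OF assms] by blast
  show "linear (orth_proj V)" unfolding orth_proj_onb[OF E, abs_def] linear_iff
    by (simp add: inner_add_left scaleR_add_left sum.distrib scaleR_sum_right)
  show "orth_proj V x \<in> V" unfolding orth_proj_onb[OF E] by (rule onb_sum_in[OF E])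
  show "u \<bullet> orth_proj V y = u \<bullet> y" if "u \<in> V"
    using onb_residual_orthogonal[OF E that, of y] unfolding orth_proj_onb[OF E]
    by (simp add: inner_diff_right inner_commute)
  show "orth_proj V v = v" if "v \<in> V" unfolding orth_proj_def using that by (rule closest_point_self)
qed

section \<open>Symmetric bilinear forms\<close>

lemma bilinear_uminus: "bilinear \<beta> \<Longrightarrow> bilinear (\<lambda>u w. - \<beta> u w)"
  unfolding bilinear_def by (simp add: linear_compose_neg)

lemma bilinear_scale:
  fixes \<beta> :: "'a::real_vector \<Rightarrow> 'b::real_vector \<Rightarrow> real"
  shows "bilinear \<beta> \<Longrightarrow> bilinear (\<lambda>u w. c * \<beta> u w)"
  by (simp add: bilinear_def linear_iff algebra_simps)

lemma bilinear_onb_expand: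
  fixes B :: "'a::euclidean_space \<Rightarrow> 'a \<Rightarrow> real"
  assumes "onb E V" "bilinear B" "v \<in> V"
  shows "B v v = (\<Sum>(p, q)\<in>E \<times> E. (v \<bullet> p) * (v \<bullet> q) * B p q)"
proof -
  have "B v v = B (\<Sum>p\<in>E. (v \<bullet> p) *\<^sub>R p) (\<Sum>p\<in>E. (v \<bullet> p) *\<^sub>R p)"
    using onb_expand[OF assms(1,3)] by simp
  also have "\<dots> = (\<Sum>(p, q)\<in>E \<times> E. B ((v \<bullet> p) *\<^sub>R p) ((v \<bullet> q) *\<^sub>R q))"
    by (rule bilinear_sum[OF assms(2)])
  also have "\<dots> = (\<Sum>(p, q)\<in>E \<times> E. (v \<bullet> p) * (v \<bullet> q) * B p q)"
    by (intro sum.cong refl) (auto simp: bilinear_lmul[OF assms(2)] bilinear_rmul[OF assms(2)])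
  finally show ?thesis .
qed

lemma bilinear_onb_diff_bound:
  fixes B1 B2 :: "'a::euclidean_space \<Rightarrow> 'a \<Rightarrow> real"
  assumes "onb E V" "bilinear B1" "bilinear B2" "v \<in> V"
    and "\<And>p q. p \<in> E \<Longrightarrow> q \<in> E \<Longrightarrow> \<bar>B1 p q - B2 p q\<bar> \<le> \<delta>"
  shows "\<bar>B1 v v - B2 v v\<bar> \<le> real (card E) ^ 2 * \<delta> * (v \<bullet> v)"
proof -
  have "\<bar>(v \<bullet> p) * (v \<bullet> q) * (B1 p q - B2 p q)\<bar> \<le> \<delta> * (v \<bullet> v)" if "p \<in> E" "q \<in> E" for p q
  proof -
    have "\<bar>v \<bullet> e\<bar> \<le> norm v" if "e \<in> E" for e
    proof -
      have "norm e = 1" using onbD(5)[OF assms(1) that] by (simp add: norm_eq_1)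
      then show ?thesis using Cauchy_Schwarz_ineq2[of v e] by simp
    qed
    then have "\<bar>v \<bullet> p\<bar> * \<bar>v \<bullet> q\<bar> \<le> norm v * norm v"
      using that by (intro mult_mono) auto
    then have "\<bar>(v \<bullet> p) * (v \<bullet> q)\<bar> \<le> v \<bullet> v" by (simp add: abs_mult norm_eq_sqrt_inner)
    then show ?thesis
      using assms(5)[OF that] by (simp add: abs_mult mult_mono' mult.commute)
  qed
  then have "\<bar>\<Sum>(p, q)\<in>E \<times> E. (v \<bullet> p) * (v \<bullet> q) * (B1 p q - B2 p q)\<bar> \<le> (\<Sum>(p, q)\<in>E \<times> E. \<delta> * (v \<bullet> v))"
    by (intro order_trans[OF sum_abs] sum_mono) auto
  moreover have "B1 v v - B2 v v = (\<Sum>(p, q)\<in>E \<times> E. (v \<bullet> p) * (v \<bullet> q) * (B1 p q - B2 p q))"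
    unfolding bilinear_onb_expand[OF assms(1,2,4)] bilinear_onb_expand[OF assms(1,3,4)]
    by (simp add: sum_subtractf[symmetric] case_prod_beta algebra_simps)
  ultimately show ?thesis by (simp add: card_cartesian_product power2_eq_square)
qed

lemma qf_bilin_diagonal:
  fixes \<beta> :: "'a::real_vector \<Rightarrow> 'a \<Rightarrow> real"
  assumes "bilinear \<beta>" "\<beta> u w = \<beta> w u"
  shows "qf_bilin (\<lambda>v. \<beta> v v) u w = \<beta> u w"
  using assms by (simp add: qf_bilin_def bilinear_ladd bilinear_radd)

lemma symmetric_bilinear_eq_0_of_quadratic_eq_0:
  fixes \<beta> :: "'a::real_vector \<Rightarrow> 'a \<Rightarrow> real"
  assumes "subspace V" "bilinear \<beta>" "\<And>u w. u \<in> V \<Longrightarrow> w \<in> V \<Longrightarrow> \<beta> u w = \<beta> w u"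
    and "\<And>v. v \<in> V \<Longrightarrow> \<beta> v v = 0" "u \<in> V" "w \<in> V"
  shows "\<beta> u w = 0"
proof -
  have "u + w \<in> V" using assms(1,5,6) by (rule subspace_add)
  then have "qf_bilin (\<lambda>v. \<beta> v v) u w = 0" using assms(4-6) unfolding qf_bilin_def by simp
  then show ?thesis using qf_bilin_diagonal[OF assms(2) assms(3)[OF assms(5,6)]] by simp
qed

lemma linear_coeff_zero_if_quadratic_nonpos:
  fixes b K :: real
  assumes "\<And>s. 2 * s * b + s\<^sup>2 * K \<le> 0"
  shows "b = 0"
proof (rule ccontr)
  assume "b \<noteq> 0"
  define d where "d = \<bar>K\<bar> + 1"
  have d: "d > 0" unfolding d_def by simp
  have "2 * (b / d) * b + (b / d)\<^sup>2 * K = b\<^sup>2 * (2 * d + K) / d\<^sup>2"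
    using d by (simp add: field_simps power2_eq_square)
  moreover have "b\<^sup>2 * (2 * d + K) / d\<^sup>2 > 0"
    using d \<open>b \<noteq> 0\<close> unfolding d_def by (intro divide_pos_pos mult_pos_pos) auto
  ultimately show False using assms[of "b / d"] by linarith
qed

lemma bilinear_quadratic_max_on_sphere:
  fixes V :: "'a::euclidean_space set" and \<beta> :: "'a \<Rightarrow> 'a \<Rightarrow> real"
  assumes "subspace V" "V \<noteq> {0}" "bilinear \<beta>"
  obtains v0 where "v0 \<in> V" "norm v0 = 1" "\<And>y. y \<in> V \<Longrightarrow> \<beta> y y \<le> \<beta> v0 v0 * (y \<bullet> y)"
proof -
  let ?S = "sphere 0 1 \<inter> V"
  obtain x where x: "x \<in> V" "x \<noteq> 0" using assms(1,2) subspace_0 by blast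
  then have "x /\<^sub>R norm x \<in> ?S" using assms(1) by (simp add: subspace_scale)
  moreover have "compact ?S" by (intro compact_Int_closed compact_sphere closed_subspace assms(1))
  moreover have "continuous_on ?S (\<lambda>v. \<beta> v v)"
    using bounded_bilinear.continuous_on[OF _ continuous_on_id continuous_on_id] assms(3)
    by (simp add: bilinear_conv_bounded_bilinear)
  ultimately obtain v0 where v0: "v0 \<in> ?S" and max: "\<And>y. y \<in> ?S \<Longrightarrow> \<beta> y y \<le> \<beta> v0 v0"
    using continuous_attains_sup[of ?S "\<lambda>v. \<beta> v v"] by blast
  have "\<beta> y y \<le> \<beta> v0 v0 * (y \<bullet> y)" if "y \<in> V" for y
  proof (cases "y = 0")
    case True
    then show ?thesis using assms(3) by (simp add: bilinear_lzero)
  next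
    case False
    let ?y = "(1 / norm y) *\<^sub>R y"
    have "?y \<in> ?S" using that False assms(1) by (simp add: subspace_scale)
    then have "(norm y)\<^sup>2 * \<beta> ?y ?y \<le> (norm y)\<^sup>2 * \<beta> v0 v0" by (simp add: max mult_left_mono)
    moreover have "(norm y)\<^sup>2 * \<beta> ?y ?y = \<beta> y y"
      using False assms(3) by (simp add: bilinear_lmul bilinear_rmul power2_eq_square)
    ultimately show ?thesis by (simp add: power2_norm_eq_inner mult.commute)
  qed
  then show ?thesis using that v0 by auto
qed

text \<open>A maximiser of the quadratic form on the unit sphere is an eigendirection: the form
  vanishes between it and its orthogonal complement, by first-order optimality.\<close>

lemma symmetric_bilinear_max_direction:
  fixes V :: "'a::euclidean_space set" and \<beta> :: "'a \<Rightarrow> 'a \<Rightarrow> real"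
  assumes "subspace V" "V \<noteq> {0}" "bilinear \<beta>" "\<And>u w. u \<in> V \<Longrightarrow> w \<in> V \<Longrightarrow> \<beta> u w = \<beta> w u"
  obtains v0 where "v0 \<in> V" "norm v0 = 1" "\<And>w. w \<in> V \<Longrightarrow> w \<bullet> v0 = 0 \<Longrightarrow> \<beta> w v0 = 0"
proof -
  obtain v0 where v0: "v0 \<in> V" "norm v0 = 1" and max: "\<And>y. y \<in> V \<Longrightarrow> \<beta> y y \<le> \<beta> v0 v0 * (y \<bullet> y)"
    using bilinear_quadratic_max_on_sphere[OF assms(1-3)] by blast
  have "\<beta> w v0 = 0" if w: "w \<in> V" "w \<bullet> v0 = 0" for w
  proof (rule linear_coeff_zero_if_quadratic_nonpos)
    fix s :: real
    have "v0 + s *\<^sub>R w \<in> V" using w v0 assms(1) by (simp add: subspace_add subspace_scale)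
    from max[OF this] have "\<beta> v0 v0 + 2 * s * \<beta> w v0 + s\<^sup>2 * \<beta> w w
        \<le> \<beta> v0 v0 * (1 + s\<^sup>2 * (w \<bullet> w))"
      using v0 w assms(4)[OF v0(1) w(1)] assms(3)
      by (simp add: bilinear_ladd bilinear_radd bilinear_lmul bilinear_rmul inner_add_left
          inner_add_right inner_commute norm_eq_1 power2_eq_square algebra_simps)
    then show "2 * s * \<beta> w v0 + s\<^sup>2 * (\<beta> w w - \<beta> v0 v0 * (w \<bullet> w)) \<le> 0"
      by (simp add: algebra_simps)
  qed
  then show ?thesis using that v0 by blast
qed

lemma onb_insert_orthogonal_complement:
  fixes V :: "'a::euclidean_space set"
  assumes "subspace V" "v0 \<in> V" "norm v0 = 1" "onb E {w \<in> V. w \<bullet> v0 = 0}"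
  shows "onb (insert v0 E) V"
  unfolding onb_def
proof (intro conjI)
  have E: "E \<subseteq> V" "\<And>e. e \<in> E \<Longrightarrow> e \<bullet> v0 = 0" using onbD(2)[OF assms(4)] by auto
  show "finite (insert v0 E)" using onbD(1)[OF assms(4)] by simp
  show "insert v0 E \<subseteq> V" using E assms(2) by simp
  show "pairwise orthogonal (insert v0 E)"
    using assms(4) E(2) unfolding onb_def by (auto simp: pairwise_insert orthogonal_def inner_commute)
  show "\<forall>e\<in>insert v0 E. norm e = 1" using assms(3,4) unfolding onb_def by simp
  show "span (insert v0 E) = V"
  proof
    show "span (insert v0 E) \<subseteq> V" using E assms(1,2) by (simp add: span_minimal)
    show "V \<subseteq> span (insert v0 E)"
    proof
      fix v assume "v \<in> V"
      have "v - (v \<bullet> v0) *\<^sub>R v0 \<in> {w \<in> V. w \<bullet> v0 = 0}"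
        using \<open>v \<in> V\<close> assms(1-3) by (simp add: subspace_diff subspace_scale inner_diff_left norm_eq_1)
      then have "v - (v \<bullet> v0) *\<^sub>R v0 \<in> span E" using onbD(4)[OF assms(4)] by simp
      then show "v \<in> span (insert v0 E)" using span_breakdown_eq by blast
    qed
  qed
qed

definition diagonalises :: "('a \<Rightarrow> 'a \<Rightarrow> real) \<Rightarrow> 'a set \<Rightarrow> bool" where
  "diagonalises \<beta> E \<longleftrightarrow> (\<forall>e\<in>E. \<forall>f\<in>E. e \<noteq> f \<longrightarrow> \<beta> e f = 0)"

theorem symmetric_bilinear_diagonalisable:
  fixes V :: "'a::euclidean_space set" and \<beta> :: "'a \<Rightarrow> 'a \<Rightarrow> real"
  assumes "subspace V" "bilinear \<beta>" "\<And>u w. u \<in> V \<Longrightarrow> w \<in> V \<Longrightarrow> \<beta> u w = \<beta> w u"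
  obtains E where "onb E V" "diagonalises \<beta> E"
  using assms(1,3)
proof (induction "dim V" arbitrary: V thesis rule: less_induct)
  case less
  show ?case
  proof (cases "V = {0}")
    case True
    then have "onb {} V" unfolding onb_def by simp
    then show ?thesis using less.prems(1) unfolding diagonalises_def by blast
  next
    case False
    obtain v0 where v0: "v0 \<in> V" "norm v0 = 1" and orth: "\<And>w. w \<in> V \<Longrightarrow> w \<bullet> v0 = 0 \<Longrightarrow> \<beta> w v0 = 0"
      using symmetric_bilinear_max_direction[OF less.prems(2) False assms(2) less.prems(3)] by blast
    define V' where "V' = {w \<in> V. w \<bullet> v0 = 0}"
    have subV': "subspace V'"
      unfolding V'_def using less.prems(2) by (auto simp: subspace_def inner_add_left)
    have "v0 \<notin> V'" using v0(2) unfolding V'_def by (auto simp: norm_eq_1)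
    then have "V' \<subset> V" using v0(1) unfolding V'_def by blast
    moreover have "span V' = V'" "span V = V" using subV' less.prems(2) by (simp_all add: span_eq_iff)
    ultimately have "dim V' < dim V" by (metis dim_psubset)
    then obtain E where E: "onb E V'" and dg: "diagonalises \<beta> E"
      using less.hyps[of V'] subV' less.prems(3) unfolding V'_def by blast
    have "onb (insert v0 E) V"
      using onb_insert_orthogonal_complement[OF less.prems(2) v0] E unfolding V'_def by simp
    moreover have "diagonalises \<beta> (insert v0 E)"
      using dg orth onbD(2)[OF E] less.prems(3)[OF v0(1)] unfolding diagonalises_def V'_def
      by (auto simp: inner_commute)
    ultimately show ?thesis using less.prems(1) by blast
  qed
qed

lemma diagonalises_subset: "diagonalises \<beta> E \<Longrightarrow> F \<subseteq> E \<Longrightarrow> diagonalises \<beta> F"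
  unfolding diagonalises_def by blast

lemma finite_pos_lower_bound:
  fixes f :: "'a \<Rightarrow> real"
  assumes "finite E" "\<And>e. e \<in> E \<Longrightarrow> f e > 0"
  obtains c where "c > 0" "\<And>e. e \<in> E \<Longrightarrow> c \<le> f e"
proof
  show "Min (insert 1 (f ` E)) > 0" using assms by (subst Min_gr_iff) auto
  show "Min (insert 1 (f ` E)) \<le> f e" if "e \<in> E" for e using assms(1) that by (intro Min_le) auto
qed

lemma diagonal_quadratic:
  fixes \<beta> :: "'a::euclidean_space \<Rightarrow> 'a \<Rightarrow> real"
  assumes "onb E V" "bilinear \<beta>" "diagonalises \<beta> E" "v \<in> V"
  shows "\<beta> v v = (\<Sum>e\<in>E. \<beta> e e * (v \<bullet> e)\<^sup>2)"
proof -
  have "\<beta> v v = (\<Sum>e\<in>E. \<Sum>f\<in>E. (v \<bullet> e) * (v \<bullet> f) * \<beta> e f)"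
    unfolding bilinear_onb_expand[OF assms(1,2,4)] by (simp add: sum.cartesian_product)
  also have "\<dots> = (\<Sum>e\<in>E. \<Sum>f\<in>E. if f = e then (v \<bullet> e) * (v \<bullet> e) * \<beta> e e else 0)"
    using assms(3) unfolding diagonalises_def by (intro sum.cong refl) auto
  also have "\<dots> = (\<Sum>e\<in>E. \<beta> e e * (v \<bullet> e)\<^sup>2)"
    using onbD(1)[OF assms(1)] by (simp add: sum.delta power2_eq_square mult.commute)
  finally show ?thesis .
qed

lemma diagonal_quadratic_lower:
  fixes \<beta> :: "'a::euclidean_space \<Rightarrow> 'a \<Rightarrow> real"
  assumes "onb E V" "bilinear \<beta>" "diagonalises \<beta> E" "v \<in> V" "\<And>e. e \<in> E \<Longrightarrow> c \<le> \<beta> e e"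
  shows "c * (v \<bullet> v) \<le> \<beta> v v"
proof -
  have "c * (v \<bullet> v) = (\<Sum>e\<in>E. c * (v \<bullet> e)\<^sup>2)"
    using onb_inner_self[OF assms(1,4)] by (simp add: sum_distrib_left)
  also have "\<dots> \<le> (\<Sum>e\<in>E. \<beta> e e * (v \<bullet> e)\<^sup>2)"
    using assms(5) by (intro sum_mono mult_right_mono) auto
  finally show ?thesis using diagonal_quadratic[OF assms(1-4)] by simp
qed

lemma diagonal_quadratic_upper:
  fixes \<beta> :: "'a::euclidean_space \<Rightarrow> 'a \<Rightarrow> real"
  assumes "onb E V" "bilinear \<beta>" "diagonalises \<beta> E" "v \<in> V" "\<And>e. e \<in> E \<Longrightarrow> \<beta> e e \<le> c"
  shows "\<beta> v v \<le> c * (v \<bullet> v)"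
proof -
  have "(\<Sum>e\<in>E. \<beta> e e * (v \<bullet> e)\<^sup>2) \<le> (\<Sum>e\<in>E. c * (v \<bullet> e)\<^sup>2)"
    using assms(5) by (intro sum_mono mult_right_mono) auto
  also have "\<dots> = c * (v \<bullet> v)"
    using onb_inner_self[OF assms(1,4)] by (simp add: sum_distrib_left)
  finally show ?thesis using diagonal_quadratic[OF assms(1-4)] by simp
qed

lemma diagonal_quadratic_pos:
  fixes \<beta> :: "'a::euclidean_space \<Rightarrow> 'a \<Rightarrow> real"
  assumes "onb E V" "bilinear \<beta>" "diagonalises \<beta> E" "v \<in> V" "v \<noteq> 0" "\<And>e. e \<in> E \<Longrightarrow> \<beta> e e > 0"
  shows "\<beta> v v > 0"
proof -
  obtain c where "c > 0" "\<And>e. e \<in> E \<Longrightarrow> c \<le> \<beta> e e"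
    using finite_pos_lower_bound[of E "\<lambda>e. \<beta> e e"] onbD(1)[OF assms(1)] assms(6) by blast
  moreover have "v \<bullet> v > 0" using assms(5) by simp
  ultimately have "0 < c * (v \<bullet> v)" by simp
  also have "\<dots> \<le> \<beta> v v" by (rule diagonal_quadratic_lower[OF assms(1-4)]) fact
  finally show ?thesis .
qed

lemma diagonal_nondegenerate:
  fixes \<beta> :: "'a::euclidean_space \<Rightarrow> 'a \<Rightarrow> real"
  assumes "onb E V" "bilinear \<beta>" "diagonalises \<beta> E"
    and "\<forall>u\<in>V. (\<forall>w\<in>V. \<beta> u w = 0) \<longrightarrow> u = 0" "e \<in> E"
  shows "\<beta> e e \<noteq> 0"
proof
  assume z: "\<beta> e e = 0"
  have lin: "linear (\<beta> e)" using assms(2) unfolding bilinear_def by auto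
  have "\<beta> e w = 0" if "w \<in> V" for w
  proof -
    have "\<beta> e w = (\<Sum>f\<in>E. (w \<bullet> f) * \<beta> e f)"
      by (subst onb_expand[OF assms(1) that]) (simp add: linear_sum[OF lin] linear_scale[OF lin])
    also have "\<dots> = 0" using assms(3,5) z unfolding diagonalises_def by (intro sum.neutral) auto
    finally show ?thesis .
  qed
  then have "e = 0" using assms(4,5) onbD(2)[OF assms(1)] by blast
  then show False using onbD(5)[OF assms(1,5)] by simp
qed

section \<open>Inertia indices\<close>

lemma dim_add_le_of_trivial_inter:
  fixes V :: "'a::euclidean_space set"
  assumes "subspace U1" "subspace U2" "U1 \<subseteq> V" "U2 \<subseteq> V" "U1 \<inter> U2 \<subseteq> {0}"
  shows "dim U1 + dim U2 \<le> dim V"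
proof -
  have "U1 \<inter> U2 = {0}" using assms subspace_0 by blast
  then have "dim (U1 \<inter> U2) = 0" using dim_eq_0[of "U1 \<inter> U2"] by simp
  moreover have "{x + y |x y. x \<in> U1 \<and> y \<in> U2} \<subseteq> span V"
  proof
    fix z assume "z \<in> {x + y |x y. x \<in> U1 \<and> y \<in> U2}"
    then obtain x y where "z = x + y" "x \<in> U1" "y \<in> U2" by blast
    then show "z \<in> span V" using assms(3,4) by (simp add: span_add span_base subsetD)
  qed
  from dim_subset[OF this] have "dim {x + y |x y. x \<in> U1 \<and> y \<in> U2} \<le> dim V"
    by (simp add: dim_span)
  ultimately show ?thesis using dim_sums_Int[OF assms(1,2)] by linarith
qed

lemma qf_pos_index_attained:
  fixes V :: "'a::euclidean_space set"
  assumes "subspace V"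
  obtains U where "subspace U" "U \<subseteq> V" "\<forall>u\<in>U. u \<noteq> 0 \<longrightarrow> q u > 0" "dim U = qf_pos_index q V"
proof -
  let ?S = "{dim U | U. subspace U \<and> U \<subseteq> V \<and> (\<forall>u\<in>U. u \<noteq> 0 \<longrightarrow> q u > 0)}"
  have "?S \<subseteq> {..dim V}" using dim_subset by auto
  then have "finite ?S" using finite_subset by blast
  moreover have "{0} \<subseteq> V" using subspace_0[OF assms] by simp
  then have "dim {0::'a} \<in> ?S" unfolding mem_Collect_eq by (intro exI[of _ "{0::'a}"]) simp
  ultimately have "Max ?S \<in> ?S" by (intro Max_in) auto
  then show ?thesis using that unfolding qf_pos_index_def by auto
qed

lemma qf_pos_index_ge:
  fixes V :: "'a::euclidean_space set"
  assumes "subspace U" "U \<subseteq> V" "\<forall>u\<in>U. u \<noteq> 0 \<longrightarrow> q u > 0"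
  shows "dim U \<le> qf_pos_index q V"
proof -
  let ?S = "{dim U | U. subspace U \<and> U \<subseteq> V \<and> (\<forall>u\<in>U. u \<noteq> 0 \<longrightarrow> q u > 0)}"
  have "?S \<subseteq> {..dim V}" using dim_subset by auto
  then have "finite ?S" using finite_subset by blast
  moreover have "dim U \<in> ?S" using assms by blast
  ultimately show ?thesis unfolding qf_pos_index_def by simp
qed

lemma qf_pos_index_eqI:
  fixes V :: "'a::euclidean_space set"
  assumes "subspace V" "subspace P" "P \<subseteq> V" "\<forall>u\<in>P. u \<noteq> 0 \<longrightarrow> q u > 0"
    and "subspace N" "N \<subseteq> V" "\<forall>u\<in>N. u \<noteq> 0 \<longrightarrow> q u \<le> 0" and "dim P + dim N = dim V"
  shows "qf_pos_index q V = dim P"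
proof -
  obtain U where U: "subspace U" "U \<subseteq> V" "\<forall>u\<in>U. u \<noteq> 0 \<longrightarrow> q u > 0" "dim U = qf_pos_index q V"
    using qf_pos_index_attained[OF assms(1)] by blast
  have "U \<inter> N \<subseteq> {0}"
  proof
    fix u assume u: "u \<in> U \<inter> N"
    show "u \<in> {0}"
    proof (rule ccontr)
      assume "u \<notin> {0}"
      then have "q u > 0" "q u \<le> 0" using u U(3) assms(7) by auto
      then show False by simp
    qed
  qed
  then have "dim U + dim N \<le> dim V" by (intro dim_add_le_of_trivial_inter U(1,2) assms(5,6))
  then show ?thesis using qf_pos_index_ge[OF assms(2-4)] U(4) assms(8) by linarith
qed

lemma qf_neg_index_eq_pos_index_uminus: "qf_neg_index q V = qf_pos_index (\<lambda>v. - q v) V"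
  unfolding qf_neg_index_def qf_pos_index_def by simp

lemma qf_signature_scale:
  assumes "r \<noteq> 0"
  shows "qf_signature (\<lambda>v. r * q v) V = (if r > 0 then qf_signature q V else - qf_signature q V)"
proof (cases "r > 0")
  case True
  then show ?thesis unfolding qf_signature_def qf_pos_index_def qf_neg_index_def
    by (simp add: zero_less_mult_iff mult_less_0_iff)
next
  case False
  then have "r < 0" using assms by simp
  then show ?thesis unfolding qf_signature_def qf_pos_index_def qf_neg_index_def
    by (simp add: zero_less_mult_iff mult_less_0_iff)
qed

lemma qf_pos_index_diagonal:
  fixes \<beta> :: "'a::euclidean_space \<Rightarrow> 'a \<Rightarrow> real"
  assumes "onb E V" "bilinear \<beta>" "diagonalises \<beta> E"
  shows "qf_pos_index (\<lambda>v. \<beta> v v) V = card {e\<in>E. \<beta> e e > 0}"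
proof -
  let ?P = "{e\<in>E. \<beta> e e > 0}" and ?N = "{e\<in>E. \<beta> e e \<le> 0}"
  have onbP: "onb ?P (span ?P)" and onbN: "onb ?N (span ?N)" using onb_subset[OF assms(1)] by auto
  have dg: "diagonalises \<beta> ?P" "diagonalises \<beta> ?N" using diagonalises_subset[OF assms(3)] by auto
  have dims: "dim (span ?P) = card ?P" "dim (span ?N) = card ?N"
    by (rule onb_dim_span_subset[OF assms(1)], blast)+
  have "card ?P + card ?N = card E"
    using onbD(1)[OF assms(1)] by (subst card_Un_disjoint[symmetric]) (auto intro: arg_cong[where f=card])
  then have dim_sum: "dim (span ?P) + dim (span ?N) = dim V" using dims onb_card[OF assms(1)] by simp
  have pos: "\<forall>u\<in>span ?P. u \<noteq> 0 \<longrightarrow> \<beta> u u > 0"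
  proof (intro ballI impI)
    fix u assume "u \<in> span ?P" "u \<noteq> 0"
    then show "\<beta> u u > 0" by (rule diagonal_quadratic_pos[OF onbP assms(2) dg(1)]) simp
  qed
  have nonpos: "\<forall>u\<in>span ?N. u \<noteq> 0 \<longrightarrow> \<beta> u u \<le> 0"
  proof (intro ballI impI)
    fix u assume "u \<in> span ?N"
    from diagonal_quadratic_upper[OF onbN assms(2) dg(2) this, of 0] show "\<beta> u u \<le> 0" by simp
  qed
  have "span ?P \<subseteq> V" "span ?N \<subseteq> V" by (rule onb_span_subset[OF assms(1)], blast)+
  then have "qf_pos_index (\<lambda>v. \<beta> v v) V = dim (span ?P)"
    using qf_pos_index_eqI[OF onbD(3)[OF assms(1)] subspace_span _ pos subspace_span _ nonpos dim_sum]
    by blast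
  then show ?thesis using dims by simp
qed

lemma qf_neg_index_diagonal:
  fixes \<beta> :: "'a::euclidean_space \<Rightarrow> 'a \<Rightarrow> real"
  assumes "onb E V" "bilinear \<beta>" "diagonalises \<beta> E"
  shows "qf_neg_index (\<lambda>v. \<beta> v v) V = card {e\<in>E. \<beta> e e < 0}"
proof -
  have "diagonalises (\<lambda>u w. - \<beta> u w) E" using assms(3) unfolding diagonalises_def by auto
  then show ?thesis
    using qf_pos_index_diagonal[OF assms(1) bilinear_uminus[OF assms(2)]]
    by (simp add: qf_neg_index_eq_pos_index_uminus)
qed

lemma qf_pos_index_perturbation:
  fixes \<beta> :: "'a::euclidean_space \<Rightarrow> 'a \<Rightarrow> real"
  assumes "onb E V" "bilinear \<beta>" "diagonalises \<beta> E" "\<And>e. e \<in> E \<Longrightarrow> m \<le> \<bar>\<beta> e e\<bar>" "m > 0"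
    and close: "\<forall>v\<in>V. v \<noteq> 0 \<longrightarrow> \<bar>q v - \<beta> v v\<bar> < m * (v \<bullet> v)"
  shows "qf_pos_index q V = qf_pos_index (\<lambda>v. \<beta> v v) V"
proof -
  let ?P = "{e\<in>E. \<beta> e e > 0}" and ?N = "{e\<in>E. \<beta> e e < 0}"
  have onbP: "onb ?P (span ?P)" and onbN: "onb ?N (span ?N)" using onb_subset[OF assms(1)] by auto
  have dg: "diagonalises \<beta> ?P" "diagonalises \<beta> ?N" using diagonalises_subset[OF assms(3)] by auto
  have sub: "span ?P \<subseteq> V" "span ?N \<subseteq> V" by (rule onb_span_subset[OF assms(1)], blast)+
  have dims: "dim (span ?P) = card ?P" "dim (span ?N) = card ?N"
    by (rule onb_dim_span_subset[OF assms(1)], blast)+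
  have "E = ?P \<union> ?N" using assms(4,5) by force
  then have "card ?P + card ?N = card E"
    using onbD(1)[OF assms(1)] by (metis (no_types, lifting) card_Un_disjoint disjoint_iff
        finite_Un less_asym mem_Collect_eq)
  then have dim_sum: "dim (span ?P) + dim (span ?N) = dim V" using dims onb_card[OF assms(1)] by simp
  have pos: "\<forall>u\<in>span ?P. u \<noteq> 0 \<longrightarrow> q u > 0"
  proof (intro ballI impI)
    fix u assume u: "u \<in> span ?P" "u \<noteq> 0"
    have "m * (u \<bullet> u) \<le> \<beta> u u"
      by (rule diagonal_quadratic_lower[OF onbP assms(2) dg(1) u(1)]) (use assms(4) in force)
    then show "q u > 0" using close u sub(1) by fastforce
  qed
  have nonpos: "\<forall>u\<in>span ?N. u \<noteq> 0 \<longrightarrow> q u \<le> 0"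
  proof (intro ballI impI)
    fix u assume u: "u \<in> span ?N" "u \<noteq> 0"
    have "\<beta> u u \<le> (- m) * (u \<bullet> u)"
      by (rule diagonal_quadratic_upper[OF onbN assms(2) dg(2) u(1)]) (use assms(4) in force)
    then show "q u \<le> 0" using close u sub(2) by fastforce
  qed
  have "qf_pos_index q V = dim (span ?P)"
    using qf_pos_index_eqI[OF onbD(3)[OF assms(1)] subspace_span _ pos subspace_span _ nonpos dim_sum] sub
    by blast
  then show ?thesis using qf_pos_index_diagonal[OF assms(1-3)] dims by simp
qed

theorem qf_signature_perturbation:
  fixes \<beta> :: "'a::euclidean_space \<Rightarrow> 'a \<Rightarrow> real"
  assumes "subspace V" "bilinear \<beta>" "\<And>u w. u \<in> V \<Longrightarrow> w \<in> V \<Longrightarrow> \<beta> u w = \<beta> w u"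
    and "qf_nondegenerate (\<lambda>v. \<beta> v v) V"
  obtains m where "m > 0"
    "\<And>q. \<forall>v\<in>V. v \<noteq> 0 \<longrightarrow> \<bar>q v - \<beta> v v\<bar> < m * (v \<bullet> v) \<Longrightarrow>
       qf_signature q V = qf_signature (\<lambda>v. \<beta> v v) V"
proof -
  obtain E where E: "onb E V" and dg: "diagonalises \<beta> E"
    using symmetric_bilinear_diagonalisable[OF assms(1-3)] by blast
  have "\<forall>u\<in>V. (\<forall>w\<in>V. \<beta> u w = 0) \<longrightarrow> u = 0"
    using assms(4) qf_bilin_diagonal[OF assms(2) assms(3)] unfolding qf_nondegenerate_def by simp
  then have "\<And>e. e \<in> E \<Longrightarrow> \<bar>\<beta> e e\<bar> > 0" using diagonal_nondegenerate[OF E assms(2) dg] by simp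
  then obtain m where m: "m > 0" "\<And>e. e \<in> E \<Longrightarrow> m \<le> \<bar>\<beta> e e\<bar>"
    using finite_pos_lower_bound[of E "\<lambda>e. \<bar>\<beta> e e\<bar>"] onbD(1)[OF E] by blast
  have dg': "diagonalises (\<lambda>u w. - \<beta> u w) E" using dg unfolding diagonalises_def by simp
  have "qf_signature q V = qf_signature (\<lambda>v. \<beta> v v) V"
    if close: "\<forall>v\<in>V. v \<noteq> 0 \<longrightarrow> \<bar>q v - \<beta> v v\<bar> < m * (v \<bullet> v)" for q
  proof -
    have "\<forall>v\<in>V. v \<noteq> 0 \<longrightarrow> \<bar>- q v - - \<beta> v v\<bar> < m * (v \<bullet> v)" using close by (simp add: abs_minus_commute)
    then have "qf_pos_index (\<lambda>v. - q v) V = qf_pos_index (\<lambda>v. - \<beta> v v) V"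
      using qf_pos_index_perturbation[OF E bilinear_uminus[OF assms(2)] dg' _ m(1)] m(2) by simp
    moreover have "qf_pos_index q V = qf_pos_index (\<lambda>v. \<beta> v v) V"
      using qf_pos_index_perturbation[OF E assms(2) dg m(2) m(1) close] .
    ultimately show ?thesis
      unfolding qf_signature_def qf_neg_index_eq_pos_index_uminus by simp
  qed
  then show ?thesis using that m(1) by blast
qed

section \<open>Signature of a self-adjoint operator\<close>

lemma eigenspace_diagonal:
  fixes T :: "'a::euclidean_space \<Rightarrow> 'a"
  assumes "linear T" "onb E V" "\<forall>x. T x \<in> V" "\<forall>e\<in>E. T e = \<mu> e *\<^sub>R e" "c \<noteq> 0"
  shows "{x. T x = c *\<^sub>R x} = span {e\<in>E. \<mu> e = c}"
proof
  show "span {e\<in>E. \<mu> e = c} \<subseteq> {x. T x = c *\<^sub>R x}"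
  proof (rule span_minimal)
    show "{e\<in>E. \<mu> e = c} \<subseteq> {x. T x = c *\<^sub>R x}" using assms(4) by auto
    show "subspace {x. T x = c *\<^sub>R x}"
      using assms(1) unfolding subspace_def by (auto simp: linear_0 linear_add linear_scale scaleR_add_right)
  qed
  show "{x. T x = c *\<^sub>R x} \<subseteq> span {e\<in>E. \<mu> e = c}"
  proof
    fix x assume "x \<in> {x. T x = c *\<^sub>R x}"
    then have Tx: "T x = c *\<^sub>R x" by simp
    have "x = (1 / c) *\<^sub>R T x" using Tx assms(5) by simp
    then have "x \<in> V" using assms(3) onbD(3)[OF assms(2)] by (metis subspace_scale)
    then have xe: "x = (\<Sum>e\<in>E. (x \<bullet> e) *\<^sub>R e)" by (rule onb_expand[OF assms(2)])
    have "T x = (\<Sum>e\<in>E. ((x \<bullet> e) * \<mu> e) *\<^sub>R e)"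
      by (subst xe) (simp add: linear_sum[OF assms(1)] linear_scale[OF assms(1)] assms(4))
    then have "(x \<bullet> f) * \<mu> f = c * (x \<bullet> f)" if "f \<in> E" for f
      using onb_inner_sum[OF assms(2) that] Tx by (metis inner_scaleR_left)
    then have zero: "x \<bullet> f = 0" if "f \<in> E" "\<mu> f \<noteq> c" for f
      using that by (metis mult.commute mult_cancel_left)
    have "(\<Sum>e\<in>E. (x \<bullet> e) *\<^sub>R e) = (\<Sum>e\<in>{e\<in>E. \<mu> e = c}. (x \<bullet> e) *\<^sub>R e)"
      by (rule sum.mono_neutral_right) (use onbD(1)[OF assms(2)] zero in auto)
    then have "x = (\<Sum>e\<in>{e\<in>E. \<mu> e = c}. (x \<bullet> e) *\<^sub>R e)" using xe by simp
    also have "\<dots> \<in> span {e\<in>E. \<mu> e = c}" by (intro span_sum span_scale span_base) auto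
    finally show "x \<in> span {e\<in>E. \<mu> e = c}" .
  qed
qed

lemma eig_count_diagonal:
  fixes T :: "'a::euclidean_space \<Rightarrow> 'a"
  assumes "linear T" "onb E V" "\<forall>x. T x \<in> V" "\<forall>e\<in>E. T e = \<mu> e *\<^sub>R e" "\<And>c. P c \<Longrightarrow> c \<noteq> 0"
  shows "eig_count T P = card {e\<in>E. P (\<mu> e)}"
proof -
  let ?EP = "{e\<in>E. P (\<mu> e)}"
  have eig: "{x. T x = c *\<^sub>R x} = span {e\<in>E. \<mu> e = c}" if "P c" for c
    using eigenspace_diagonal[OF assms(1-4) assms(5)[OF that]] .
  have "{c. P c \<and> (\<exists>x. x \<noteq> 0 \<and> T x = c *\<^sub>R x)} = \<mu> ` ?EP"
  proof safe
    fix c x assume "P c" "x \<noteq> 0" "T x = c *\<^sub>R x"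
    then have "x \<in> span {e\<in>E. \<mu> e = c}" using eig by blast
    then have "{e\<in>E. \<mu> e = c} \<noteq> {}" using \<open>x \<noteq> 0\<close> span_empty by force
    then show "c \<in> \<mu> ` ?EP" using \<open>P c\<close> by force
  next
    fix e assume "e \<in> E" "P (\<mu> e)"
    moreover have "e \<noteq> 0" using onbD(5)[OF assms(2) \<open>e \<in> E\<close>] by auto
    ultimately show "\<exists>x. x \<noteq> 0 \<and> T x = \<mu> e *\<^sub>R x" using assms(4) by blast
  qed
  then have "eig_count T P = (\<Sum>c\<in>\<mu> ` ?EP. dim {x. T x = c *\<^sub>R x})"
    unfolding eig_count_def by simp
  also have "\<dots> = (\<Sum>c\<in>\<mu> ` ?EP. card {e\<in>?EP. \<mu> e = c})"
  proof (rule sum.cong[OF refl])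
    fix c assume "c \<in> \<mu> ` ?EP"
    then have "P c" by auto
    then have "dim {x. T x = c *\<^sub>R x} = card {e\<in>E. \<mu> e = c}"
      using eig onb_dim_span_subset[OF assms(2)] by simp
    also have "{e\<in>E. \<mu> e = c} = {e\<in>?EP. \<mu> e = c}" using \<open>P c\<close> by auto
    finally show "dim {x. T x = c *\<^sub>R x} = card {e\<in>?EP. \<mu> e = c}" .
  qed
  also have "\<dots> = card ?EP"
    using card_eq_sum sum.group[of ?EP "\<mu> ` ?EP" \<mu> "\<lambda>_. 1::nat"] onbD(1)[OF assms(2)] by simp
  finally show ?thesis .
qed

text \<open>The orthonormal basis diagonalising the form of a self-adjoint operator consists of
  eigenvectors, so eigenvalue counts and inertia indices both count its positive and negative
  diagonal entries.\<close>

theorem op_signature_eq_qf_signature: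
  fixes T :: "'a::euclidean_space \<Rightarrow> 'a"
  assumes "linear T" "subspace V" "\<forall>x. T x \<in> V" "\<forall>u\<in>V. \<forall>w\<in>V. u \<bullet> T w = w \<bullet> T u"
  shows "op_signature T = qf_signature (\<lambda>v. v \<bullet> T v) V"
proof -
  have bil: "bilinear (\<lambda>u w. u \<bullet> T w)"
    using assms(1) unfolding bilinear_def linear_iff by (simp add: linear_add linear_scale inner_add_right inner_add_left)
  obtain E where E: "onb E V" and dg: "diagonalises (\<lambda>u w. u \<bullet> T w) E"
    using symmetric_bilinear_diagonalisable[OF assms(2) bil] assms(4) by blast
  have eig: "\<forall>e\<in>E. T e = (e \<bullet> T e) *\<^sub>R e"
  proof
    fix e assume e: "e \<in> E"
    have "T e = (\<Sum>f\<in>E. (T e \<bullet> f) *\<^sub>R f)" using onb_expand[OF E] assms(3) by blast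
    also have "\<dots> = (\<Sum>f\<in>E. (if f = e then e \<bullet> T e else 0) *\<^sub>R f)"
      using dg e unfolding diagonalises_def by (intro sum.cong refl) (auto simp: inner_commute)
    also have "\<dots> = (e \<bullet> T e) *\<^sub>R e"
      using onbD(1)[OF E] e by (simp add: if_distrib[of "\<lambda>c. c *\<^sub>R _"] sum.delta cong: if_cong)
    finally show "T e = (e \<bullet> T e) *\<^sub>R e" .
  qed
  have "eig_count T (\<lambda>c. c > 0) = card {e\<in>E. e \<bullet> T e > 0}"
    by (rule eig_count_diagonal[OF assms(1) E assms(3) eig]) simp
  moreover have "eig_count T (\<lambda>c. c < 0) = card {e\<in>E. e \<bullet> T e < 0}"
    by (rule eig_count_diagonal[OF assms(1) E assms(3) eig]) simp
  ultimately show ?thesis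
    unfolding op_signature_def qf_signature_def
      qf_pos_index_diagonal[OF E bil dg] qf_neg_index_diagonal[OF E bil dg]
    by simp
qed

section \<open>\<open>C\<^sup>k\<close> functions on open sets\<close>

text \<open>Unlike \<open>Ck_on\<close>, this notion uses two-sided derivatives; it is meant for open sets.\<close>

fun Ck :: "nat \<Rightarrow> real set \<Rightarrow> (real \<Rightarrow> real) \<Rightarrow> bool" where
  "Ck 0 U f = continuous_on U f"
| "Ck (Suc k) U f = (\<exists>f'. (\<forall>t\<in>U. (f has_real_derivative f' t) (at t)) \<and> Ck k U f')"

lemma Ck_SucI: "(\<forall>t\<in>U. (f has_real_derivative f' t) (at t)) \<Longrightarrow> Ck k U f' \<Longrightarrow> Ck (Suc k) U f"
  by (simp only: Ck.simps) blast

lemma Ck_cont: "Ck k U f \<Longrightarrow> continuous_on U f"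
proof (cases k)
  case 0
  then show "Ck k U f \<Longrightarrow> continuous_on U f" by simp
next
  case (Suc m)
  assume "Ck k U f"
  then obtain f' where "\<forall>t\<in>U. (f has_real_derivative f' t) (at t)" using Suc by auto
  then show ?thesis by (meson DERIV_isCont continuous_at_imp_continuous_on)
qed

lemma Ck_mono: "Ck (Suc k) U f \<Longrightarrow> Ck k U f"
proof (induction k arbitrary: f)
  case 0
  then obtain f' where "\<forall>t\<in>U. (f has_real_derivative f' t) (at t)" by auto
  then show ?case by (simp; meson DERIV_isCont continuous_at_imp_continuous_on)
next
  case (Suc k)
  then obtain f' where "\<forall>t\<in>U. (f has_real_derivative f' t) (at t)" "Ck (Suc k) U f'" by auto
  then show ?case using Suc.IH by auto
qed

lemma Ck_mono_le: "m \<le> k \<Longrightarrow> Ck k U f \<Longrightarrow> Ck m U f"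
proof (induction k)
  case 0 then show ?case by simp
next
  case (Suc k)
  show ?case
  proof (cases "m = Suc k")
    case True
    then show ?thesis using Suc.prems(2) by simp
  next
    case False
    then have "m \<le> k" using Suc.prems(1) by simp
    moreover have "Ck k U f" using Ck_mono Suc.prems(2) by blast
    ultimately show ?thesis using Suc.IH by blast
  qed
qed

lemma Ck_const: "Ck k U (\<lambda>t. c)"
proof (induction k arbitrary: c)
  case 0 then show ?case by simp
next
  case (Suc k)
  have d: "\<forall>t\<in>U. ((\<lambda>t. c) has_real_derivative (\<lambda>t. 0) t) (at t)" by simp
  have "Ck k U (\<lambda>t. 0)" by (rule Suc.IH)
  then show ?case using d by (intro Ck_SucI)
qed

lemma Ck_add: "Ck k U f \<Longrightarrow> Ck k U g \<Longrightarrow> Ck k U (\<lambda>t. f t + g t)"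
proof (induction k arbitrary: f g)
  case 0 then show ?case by (simp add: continuous_on_add)
next
  case (Suc k)
  from Suc.prems obtain f' g' where "\<forall>t\<in>U. (f has_real_derivative f' t) (at t)" "Ck k U f'"
     "\<forall>t\<in>U. (g has_real_derivative g' t) (at t)" "Ck k U g'" by auto
  have "Ck k U (\<lambda>t. f' t + g' t)" using Suc.IH \<open>Ck k U f'\<close> \<open>Ck k U g'\<close> by blast
  moreover have "\<forall>t\<in>U. ((\<lambda>t. f t + g t) has_real_derivative (f' t + g' t)) (at t)"
    using \<open>\<forall>t\<in>U. (f has_real_derivative f' t) (at t)\<close> \<open>\<forall>t\<in>U. (g has_real_derivative g' t) (at t)\<close>
    by (simp add: DERIV_add)
  ultimately show ?case by (intro Ck_SucI)
qed

lemma Ck_mult: "Ck k U f \<Longrightarrow> Ck k U g \<Longrightarrow> Ck k U (\<lambda>t. f t * g t)"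
proof (induction k arbitrary: f g)
  case 0 then show ?case by (simp add: continuous_on_mult)
next
  case (Suc k)
  from Suc.prems obtain f' g' where d: "\<forall>t\<in>U. (f has_real_derivative f' t) (at t)" "Ck k U f'"
     "\<forall>t\<in>U. (g has_real_derivative g' t) (at t)" "Ck k U g'" by auto
  have "Ck k U f" "Ck k U g" using Suc.prems Ck_mono by blast+
  then have "Ck k U (\<lambda>t. f' t * g t + f t * g' t)" using Suc.IH d Ck_add by blast
  moreover have "\<forall>t\<in>U. ((\<lambda>t. f t * g t) has_real_derivative (f' t * g t + f t * g' t)) (at t)"
  proof
    fix t assume t: "t \<in> U"
    show "((\<lambda>t. f t * g t) has_real_derivative (f' t * g t + f t * g' t)) (at t)"
      using DERIV_mult[OF d(1)[rule_format, OF t] d(3)[rule_format, OF t]] by (simp add: mult.commute)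
  qed
  ultimately show ?case by (intro Ck_SucI)
qed

lemma Ck_scale: "Ck k U f \<Longrightarrow> Ck k U (\<lambda>t. c * f t)"
  by (rule Ck_mult[OF Ck_const])

lemma Ck_uminus: "Ck k U f \<Longrightarrow> Ck k U (\<lambda>t. - f t)"
proof -
  assume "Ck k U f"
  then have "Ck k U (\<lambda>t. (-1) * f t)" by (rule Ck_scale)
  then show ?thesis by simp
qed

lemma Ck_sum: "finite S \<Longrightarrow> (\<And>i. i \<in> S \<Longrightarrow> Ck k U (f i)) \<Longrightarrow> Ck k U (\<lambda>t. \<Sum>i\<in>S. f i t)"
proof (induction S rule: finite_induct)
  case empty then show ?case by (simp add: Ck_const)
next
  case (insert x F)
  then show ?case by (simp add: Ck_add)
qed

lemma Ck_prod: "finite S \<Longrightarrow> (\<And>i. i \<in> S \<Longrightarrow> Ck k U (f i)) \<Longrightarrow> Ck k U (\<lambda>t. \<Prod>i\<in>S. f i t)"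
proof (induction S rule: finite_induct)
  case empty then show ?case by (simp add: Ck_const)
next
  case (insert x F)
  then show ?case by (simp add: Ck_mult)
qed

lemma Ck_inverse: "(\<forall>t\<in>U. g t \<noteq> 0) \<Longrightarrow> Ck k U g \<Longrightarrow> Ck k U (\<lambda>t. 1 / g t)"
proof (induction k arbitrary: g)
  case 0 then show ?case by (auto intro!: continuous_on_divide continuous_on_const)
next
  case (Suc k)
  from Suc.prems obtain g' where d: "\<forall>t\<in>U. (g has_real_derivative g' t) (at t)" "Ck k U g'" by auto
  have "Ck k U g" using Suc.prems Ck_mono by blast
  then have i: "Ck k U (\<lambda>t. 1 / g t)" using Suc.IH Suc.prems by blast
  have "Ck k U (\<lambda>t. - g' t * (1 / g t) * (1 / g t))"
    using Ck_mult[OF Ck_mult[OF Ck_uminus[OF d(2)] i] i] .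
  moreover have "\<forall>t\<in>U. ((\<lambda>t. 1 / g t) has_real_derivative (- g' t * (1 / g t) * (1 / g t))) (at t)"
  proof
    fix t assume t: "t \<in> U"
    have "((\<lambda>t. inverse (g t)) has_real_derivative (- (inverse (g t) * g' t * inverse (g t)))) (at t)"
      using DERIV_inverse_fun[OF d(1)[rule_format, OF t]] Suc.prems t
      by (simp add: power2_eq_square field_simps)
    then show "((\<lambda>t. 1 / g t) has_real_derivative (- g' t * (1 / g t) * (1 / g t))) (at t)"
      by (simp add: divide_inverse mult_ac)
  qed
  ultimately show ?case by auto
qed

lemma Ck_divide: "(\<forall>t\<in>U. g t \<noteq> 0) \<Longrightarrow> Ck k U f \<Longrightarrow> Ck k U g \<Longrightarrow> Ck k U (\<lambda>t. f t / g t)"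
proof -
  assume "\<forall>t\<in>U. g t \<noteq> 0" "Ck k U f" "Ck k U g"
  then have "Ck k U (\<lambda>t. f t * (1 / g t))" by (intro Ck_mult Ck_inverse)
  then show ?thesis by simp
qed

lemma Ck_cong: "open U \<Longrightarrow> (\<forall>t\<in>U. f t = g t) \<Longrightarrow> Ck k U f \<Longrightarrow> Ck k U g"
proof (cases k)
  case 0
  then show "open U \<Longrightarrow> (\<forall>t\<in>U. f t = g t) \<Longrightarrow> Ck k U f \<Longrightarrow> Ck k U g"
    using continuous_on_cong by force
next
  case (Suc m)
  assume U: "open U" and eq: "\<forall>t\<in>U. f t = g t" and "Ck k U f"
  then obtain f' where d: "\<forall>t\<in>U. (f has_real_derivative f' t) (at t)" "Ck m U f'" using Suc by auto
  have "\<forall>t\<in>U. (g has_real_derivative f' t) (at t)"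
    using d(1) U eq by (meson has_field_derivative_transform_within_open)
  then show ?thesis using Suc d(2) by auto
qed

lemma Ck_deriv:
  assumes "open U" "Ck (Suc k) U f"
  shows "Ck k U (deriv f) \<and> (\<forall>t\<in>U. (f has_real_derivative deriv f t) (at t))"
proof -
  obtain f' where d: "\<forall>t\<in>U. (f has_real_derivative f' t) (at t)" "Ck k U f'" using assms by auto
  have eq: "\<forall>t\<in>U. f' t = deriv f t" using d(1) DERIV_imp_deriv by metis
  show ?thesis using Ck_cong[OF assms(1) eq d(2)] d(1) eq by auto
qed

lemma Ck_higher: "open U \<Longrightarrow> Ck k U f \<Longrightarrow> i \<le> k \<Longrightarrow> Ck (k - i) U ((deriv ^^ i) f)"
proof (induction i)
  case 0 then show ?case by simp
next
  case (Suc i)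
  then have "Ck (Suc (k - Suc i)) U ((deriv ^^ i) f)" by (simp add: Suc_diff_Suc)
  then show ?case using Ck_deriv[OF Suc.prems(1)] by simp
qed

lemma Ck_higher_deriv:
  assumes "open U" "Ck k U f" "i < k" "t \<in> U"
  shows "((deriv ^^ i) f has_real_derivative (deriv ^^ Suc i) f t) (at t)"
proof -
  have "Ck (Suc (k - Suc i)) U ((deriv ^^ i) f)"
    using Ck_higher[OF assms(1,2), of i] assms(3) by (simp add: Suc_diff_Suc)
  then show ?thesis using Ck_deriv[OF assms(1)] assms(4) by simp
qed

lemma higher_deriv_lincomb:
  assumes "open U" "Ck k U f" "Ck k U g" "i \<le> k"
  shows "\<forall>t\<in>U. (deriv ^^ i) (\<lambda>x. a * f x + b * g x) t = a * (deriv ^^ i) f t + b * (deriv ^^ i) g t"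
  using assms(4)
proof (induction i)
  case 0 then show ?case by simp
next
  case (Suc i)
  show ?case
  proof
    fix t assume t: "t \<in> U"
    have IH: "\<forall>t\<in>U. (deriv ^^ i) (\<lambda>x. a * f x + b * g x) t = a * (deriv ^^ i) f t + b * (deriv ^^ i) g t"
      using Suc by simp
    have "(deriv ^^ Suc i) (\<lambda>x. a * f x + b * g x) t = deriv ((deriv ^^ i) (\<lambda>x. a * f x + b * g x)) t"
      by simp
    also have "\<dots> = deriv (\<lambda>x. a * (deriv ^^ i) f x + b * (deriv ^^ i) g x) t"
    proof (rule deriv_cong_ev[OF _ refl])
      show "\<forall>\<^sub>F x in nhds t. (deriv ^^ i) (\<lambda>x. a * f x + b * g x) x = a * (deriv ^^ i) f x + b * (deriv ^^ i) g x"
        using IH t assms(1) eventually_nhds by blast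
    qed
    also have "\<dots> = a * (deriv ^^ Suc i) f t + b * (deriv ^^ Suc i) g t"
    proof (rule DERIV_imp_deriv)
      have "i < k" using Suc.prems by simp
      show "((\<lambda>x. a * (deriv ^^ i) f x + b * (deriv ^^ i) g x) has_real_derivative
            a * (deriv ^^ Suc i) f t + b * (deriv ^^ Suc i) g t) (at t)"
        using Ck_higher_deriv[OF assms(1,2) \<open>i < k\<close> t] Ck_higher_deriv[OF assms(1,3) \<open>i < k\<close> t]
        by (auto intro!: derivative_eq_intros)
    qed
    finally show "(deriv ^^ Suc i) (\<lambda>x. a * f x + b * g x) t = a * (deriv ^^ Suc i) f t + b * (deriv ^^ Suc i) g t" .
  qed
qed

lemma higher_deriv_cong_open:
  assumes "open U" "\<forall>t\<in>U. f t = g t" "t \<in> U"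
  shows "(deriv ^^ i) f t = (deriv ^^ i) g t"
  by (rule higher_deriv_cong_ev[OF _ refl]) (use assms eventually_nhds in blast)

lemma Ck_on_imp_Ck:
  assumes "Ck_on k {a..b} f"
  shows "Ck k {a<..<b} f"
proof -
  obtain D where D: "D 0 = f" "\<forall>i<k. \<forall>t\<in>{a..b}. (D i has_real_derivative D (Suc i) t) (at t within {a..b})"
    "continuous_on {a..b} (D k)" using assms unfolding Ck_on_def by blast
  have "m \<le> k \<Longrightarrow> Ck m {a<..<b} (D (k - m))" for m
  proof (induction m)
    case 0
    have "{a<..<b} \<subseteq> {a..b}" by auto
    then show ?case using continuous_on_subset[OF D(3)] by simp
  next
    case (Suc m)
    then have IH: "Ck m {a<..<b} (D (k - m))" by simp
    have eq: "Suc (k - Suc m) = k - m" using Suc.prems by simp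
    have "\<forall>t\<in>{a<..<b}. (D (k - Suc m) has_real_derivative D (k - m) t) (at t)"
    proof
      fix t assume t: "t \<in> {a<..<b}"
      have "(D (k - Suc m) has_real_derivative D (Suc (k - Suc m)) t) (at t within {a..b})"
        using D(2) Suc.prems t by auto
      then show "(D (k - Suc m) has_real_derivative D (k - m) t) (at t)"
        using at_within_Icc_at[of a t b] t eq by simp
    qed
    then show ?case using IH by (intro Ck_SucI)
  qed
  from this[of k] D(1) show ?thesis by simp
qed

lemma Ck_subset: "U \<subseteq> S \<Longrightarrow> Ck k S f \<Longrightarrow> Ck k U f"
proof (induction k arbitrary: f)
  case 0 then show ?case using continuous_on_subset by auto
next
  case (Suc k)
  from Suc.prems(2) obtain f' where "\<forall>t\<in>S. (f has_real_derivative f' t) (at t)" "Ck k S f'" by auto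
  then have "\<forall>t\<in>U. (f has_real_derivative f' t) (at t)" "Ck k U f'" using Suc.prems(1) Suc.IH by auto
  then show ?case by (intro Ck_SucI)
qed

lemma taylor_vanishing_lower_derivs:
  assumes "open U" "t0 \<in> U" "Ck j U f" "j \<ge> 1" "\<forall>i<j. (deriv ^^ i) f t0 = 0"
    and "cball t0 r \<subseteq> U" "t \<noteq> t0" "\<bar>t - t0\<bar> \<le> r"
  obtains \<xi> where "\<bar>\<xi> - t0\<bar> < \<bar>t - t0\<bar>" "f t = (deriv ^^ j) f \<xi> / fact j * (t - t0) ^ j"
proof -
  have r_pos: "r > 0" using assms(7,8) by linarith
  have "((deriv ^^ m) f has_real_derivative (deriv ^^ Suc m) f s) (at s)"
    if "m < j" "t0 - r \<le> s" "s \<le> t0 + r" for m s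
    using that assms(6) by (intro Ck_higher_deriv[OF assms(1,3)]) (auto simp: dist_real_def)
  moreover have "t0 - r \<le> t" "t \<le> t0 + r" using assms(8) by (simp_all add: abs_le_iff)
  ultimately obtain \<xi> where \<xi>: "if t < t0 then t < \<xi> \<and> \<xi> < t0 else t0 < \<xi> \<and> \<xi> < t"
    and eq: "f t = (\<Sum>m<j. (deriv ^^ m) f t0 / fact m * (t - t0) ^ m)
                 + (deriv ^^ j) f \<xi> / fact j * (t - t0) ^ j"
    using Taylor[of j "\<lambda>m. (deriv ^^ m) f" f "t0 - r" "t0 + r" t0 t] assms(4,7) r_pos by fastforce
  have "\<bar>\<xi> - t0\<bar> < \<bar>t - t0\<bar>" using \<xi> by (auto split: if_splits)
  moreover have "f t = (deriv ^^ j) f \<xi> / fact j * (t - t0) ^ j" using eq assms(5) by simp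
  ultimately show ?thesis using that by blast
qed

lemma taylor_bound:
  assumes "open U" "t0 \<in> U" "Ck j U f" "j \<ge> 1" "\<forall>i<j. (deriv ^^ i) f t0 = 0" "\<epsilon> > 0"
  shows "\<forall>\<^sub>F t in nhds t0. \<bar>f t - (deriv ^^ j) f t0 / fact j * (t - t0) ^ j\<bar> \<le> \<epsilon> * \<bar>t - t0\<bar> ^ j"
proof -
  let ?fj = "(deriv ^^ j) f"
  obtain r where r: "r > 0" "cball t0 r \<subseteq> U" using assms(1,2) open_contains_cball by blast
  have "continuous_on U ?fj" using Ck_cont Ck_higher[OF assms(1,3), of j] by auto
  then have "isCont ?fj t0" using assms(1,2) continuous_on_eq_continuous_at by blast
  then obtain d where d: "d > 0" "\<And>s. \<bar>s - t0\<bar> < d \<Longrightarrow> \<bar>?fj s - ?fj t0\<bar> < \<epsilon>"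
    using assms(6) unfolding continuous_at_eps_delta dist_real_def by blast
  have "\<bar>f t - ?fj t0 / fact j * (t - t0) ^ j\<bar> \<le> \<epsilon> * \<bar>t - t0\<bar> ^ j"
    if t: "\<bar>t - t0\<bar> < min r d" for t
  proof (cases "t = t0")
    case True
    moreover have "f t0 = 0" using assms(5)[rule_format, of 0] assms(4) by simp
    ultimately show ?thesis using assms(4) by (simp add: zero_power)
  next
    case False
    moreover have "\<bar>t - t0\<bar> \<le> r" using t by simp
    ultimately obtain \<xi> where \<xi>: "\<bar>\<xi> - t0\<bar> < \<bar>t - t0\<bar>" and eq: "f t = ?fj \<xi> / fact j * (t - t0) ^ j"
      using taylor_vanishing_lower_derivs[OF assms(1-5) r(2)] by blast
    have "\<bar>f t - ?fj t0 / fact j * (t - t0) ^ j\<bar> = \<bar>?fj \<xi> - ?fj t0\<bar> / fact j * \<bar>t - t0\<bar> ^ j"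
      unfolding eq by (simp add: abs_mult power_abs flip: diff_divide_distrib left_diff_distrib)
    also have "\<dots> \<le> \<bar>?fj \<xi> - ?fj t0\<bar> / 1 * \<bar>t - t0\<bar> ^ j"
      by (intro mult_right_mono divide_left_mono) (simp_all add: fact_ge_1)
    also have "\<dots> \<le> \<epsilon> * \<bar>t - t0\<bar> ^ j"
      using d(2)[of \<xi>] \<xi> t by (intro mult_right_mono) simp_all
    finally show ?thesis .
  qed
  then show ?thesis
    unfolding eventually_nhds_metric dist_real_def using r(1) d(1) by (intro exI[of _ "min r d"]) auto
qed

lemma higher_deriv_linear_family:
  assumes "open U" "t0 \<in> U" "\<And>x. Ck k U (G x)" "i \<le> k" "\<forall>t\<in>U. linear (\<lambda>x. G x t)"
  shows "linear (\<lambda>x. (deriv ^^ i) (G x) t0)"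
  unfolding linear_iff
proof (intro allI conjI)
  fix x y
  have "(deriv ^^ i) (G (x + y)) t0 = (deriv ^^ i) (\<lambda>t. 1 * G x t + 1 * G y t) t0"
  proof (rule higher_deriv_cong_open[OF assms(1) _ assms(2)])
    show "\<forall>t\<in>U. G (x + y) t = 1 * G x t + 1 * G y t"
    proof
      fix t assume "t \<in> U"
      then have l: "linear (\<lambda>x. G x t)" using assms(5) by blast
      show "G (x + y) t = 1 * G x t + 1 * G y t" using linear_add[OF l, of x y] by simp
    qed
  qed
  also have "\<dots> = 1 * (deriv ^^ i) (G x) t0 + 1 * (deriv ^^ i) (G y) t0"
    using higher_deriv_lincomb[OF assms(1) assms(3) assms(3) assms(4)] assms(2) by blast
  finally show "(deriv ^^ i) (G (x + y)) t0 = (deriv ^^ i) (G x) t0 + (deriv ^^ i) (G y) t0" by simp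
next
  fix c x
  have "(deriv ^^ i) (G (c *\<^sub>R x)) t0 = (deriv ^^ i) (\<lambda>t. c * G x t + 0 * G x t) t0"
  proof (rule higher_deriv_cong_open[OF assms(1) _ assms(2)])
    show "\<forall>t\<in>U. G (c *\<^sub>R x) t = c * G x t + 0 * G x t"
    proof
      fix t assume "t \<in> U"
      then have l: "linear (\<lambda>x. G x t)" using assms(5) by blast
      show "G (c *\<^sub>R x) t = c * G x t + 0 * G x t" using linear_scale[OF l, of c x] by simp
    qed
  qed
  also have "\<dots> = c * (deriv ^^ i) (G x) t0 + 0 * (deriv ^^ i) (G x) t0"
    using higher_deriv_lincomb[OF assms(1) assms(3) assms(3) assms(4)] assms(2) by blast
  finally show "(deriv ^^ i) (G (c *\<^sub>R x)) t0 = c *\<^sub>R (deriv ^^ i) (G x) t0" by simp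
qed

lemma Ck_det:
  fixes A :: "real \<Rightarrow> real^'m::finite^'m"
  assumes "\<And>i j. Ck k U (\<lambda>t. A t $ i $ j)"
  shows "Ck k U (\<lambda>t. det (A t))"
  unfolding det_def by (intro Ck_sum Ck_scale Ck_prod assms finite_permutations) auto

section \<open>Frames and graph charts\<close>

lemma linear_omega_right: "linear (omega u)"
  unfolding omega_def symJ_def linear_iff by (auto simp: inner_prod_def inner_add_right algebra_simps)

lemma linear_omega_left: "linear (\<lambda>u. omega u v)"
  unfolding omega_def linear_iff by (simp add: inner_add_left)

lemma bilinear_omega: "bilinear omega"
  unfolding bilinear_def using linear_omega_right linear_omega_left by blast

lemma omega_antisym: "omega v u = - omega u v"
  unfolding omega_def symJ_def by (simp add: inner_prod_def inner_commute)

lemma linear_symJ: "linear symJ"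
  unfolding linear_iff symJ_def by simp

lemma lagrangian_subspace: "lagrangian L \<Longrightarrow> subspace L"
  unfolding lagrangian_def by simp

lemma span_range_sum:
  fixes Y :: "'i::finite \<Rightarrow> 'a::real_vector"
  assumes "z \<in> span (range Y)"
  obtains c where "z = (\<Sum>i\<in>UNIV. c i *\<^sub>R Y i)"
proof -
  from assms have "\<exists>c. z = (\<Sum>i\<in>UNIV. c i *\<^sub>R Y i)"
  proof (induction rule: span_induct_alt)
    case base
    show ?case by (rule exI[of _ "\<lambda>_. 0"]) simp
  next
    case (step r x y)
    then obtain j d where x: "x = Y j" and y: "y = (\<Sum>i\<in>UNIV. d i *\<^sub>R Y i)" by blast
    have "r *\<^sub>R x + y = (\<Sum>i\<in>UNIV. (d i + (if i = j then r else 0)) *\<^sub>R Y i)"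
      unfolding x y by (simp add: scaleR_add_left sum.distrib if_distrib[of "\<lambda>c. c *\<^sub>R _"] cong: if_cong)
    then show ?case by (rule exI[of _ "\<lambda>i. d i + (if i = j then r else 0)"])
  qed
  then show ?thesis using that by blast
qed

lemma independent_range_coeffs_zero:
  fixes Y :: "'i::finite \<Rightarrow> 'a::real_vector"
  assumes "inj Y" "independent (range Y)" "(\<Sum>i\<in>UNIV. c i *\<^sub>R Y i) = 0"
  shows "c i = 0"
proof (rule ccontr)
  assume ne: "c i \<noteq> 0"
  let ?u = "\<lambda>v. c (inv Y v)"
  have "(\<Sum>v\<in>range Y. ?u v *\<^sub>R v) = (\<Sum>i\<in>UNIV. c i *\<^sub>R Y i)"
    using assms(1) by (simp add: sum.reindex)
  then have "(\<Sum>v\<in>range Y. ?u v *\<^sub>R v) = 0" using assms(3) by simp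
  moreover have "?u (Y i) \<noteq> 0" using assms(1) ne by simp
  ultimately have "dependent (range Y)" unfolding dependent_explicit
    by (intro exI[of _ "range Y"] exI[of _ ?u] conjI bexI[of _ "Y i"]) simp_all
  then show False using assms(2) by simp
qed

lemma frame_inj_independent:
  fixes V :: "'a::euclidean_space set" and Y :: "'n::finite \<Rightarrow> 'a"
  assumes "dim V = CARD('n)" "span (range Y) = V"
  shows "inj Y" "independent (range Y)"
proof -
  have sub: "range Y \<subseteq> V" using span_superset[of "range Y"] unfolding assms(2) .
  have sp: "V \<subseteq> span (range Y)" using assms(2) by simp
  have "dim V \<le> card (range Y)" by (rule span_card_ge_dim[OF sub sp]) simp
  moreover have "card (range Y) \<le> CARD('n)" by (rule card_image_le) simp
  ultimately have c: "card (range Y) = CARD('n)" using assms(1) by linarith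
  then show "inj Y" using eq_card_imp_inj_on[of UNIV Y] by simp
  have "finite (range Y)" by simp
  then show "independent (range Y)" using card_eq_dim[OF sub] c assms(1) sp by simp
qed

lemma frame_exists:
  fixes V :: "'a::euclidean_space set"
  assumes "subspace V" "dim V = CARD('n::finite)"
  obtains Y :: "'n::finite \<Rightarrow> 'a" where "span (range Y) = V"
proof -
  obtain B where B: "B \<subseteq> V" "independent B" "V \<subseteq> span B" "card B = dim V"
    using basis_exists by blast
  obtain h where "bij_betw h (UNIV :: 'n set) B"
    using finite_same_card_bij[of "UNIV :: 'n set" B] independent_imp_finite[OF B(2)] B(4) assms(2) by auto
  then have "range h = B" by (simp add: bij_betw_def)
  then have "span (range h) = V" using B assms(1) span_minimal[of B V] by (auto intro: span_mono)
  then show ?thesis using that by blast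
qed

text \<open>Coordinates of phase space in the standard basis, indexed by \<open>'n + 'n\<close> so that
  determinants of \<open>2n \<times> 2n\<close> matrices are available.\<close>

definition phase_basis :: "('n::finite + 'n) \<Rightarrow> 'n phase" where
  "phase_basis s = (case s of Inl i \<Rightarrow> (axis i 1, 0) | Inr i \<Rightarrow> (0, axis i 1))"

definition coord :: "'n::finite phase \<Rightarrow> real^('n + 'n)" where
  "coord v = (\<chi> s. v \<bullet> phase_basis s)"

lemma phase_basis_in_Basis: "phase_basis s \<in> Basis"
  by (cases s) (auto simp: phase_basis_def Basis_prod_def axis_in_Basis_iff)

lemma coord_zero [simp]: "coord 0 = 0"
  by (simp add: coord_def vec_eq_iff)

lemma coord_inj:
  assumes "coord x = coord y"
  shows "x = y"
proof -
  have z: "(x - y) \<bullet> phase_basis s = 0" for s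
    using assms unfolding coord_def vec_eq_iff by (simp add: inner_diff_left)
  have "fst (x - y) $ i = 0" "snd (x - y) $ i = 0" for i
    using z[of "Inl i"] z[of "Inr i"] by (simp_all add: phase_basis_def inner_prod_def inner_axis)
  then have "fst (x - y) = 0" "snd (x - y) = 0" by (auto simp: vec_eq_iff)
  then show "x = y" by (simp add: prod_eq_iff)
qed

definition frame_matrix :: "('n::finite \<Rightarrow> 'n phase) \<Rightarrow> ('n \<Rightarrow> 'n phase) \<Rightarrow> real^('n + 'n)^('n + 'n)" where
  "frame_matrix X Y = (\<chi> r s. (case s of Inl i \<Rightarrow> X i | Inr i \<Rightarrow> Y i) \<bullet> phase_basis r)"

lemma frame_matrix_mult:
  "frame_matrix X Y *v c = coord ((\<Sum>i\<in>UNIV. c $ Inl i *\<^sub>R X i) + (\<Sum>i\<in>UNIV. c $ Inr i *\<^sub>R Y i))"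
proof -
  let ?col = "\<lambda>s. case s of Inl i \<Rightarrow> X i | Inr i \<Rightarrow> Y i"
  have "frame_matrix X Y *v c = coord (\<Sum>s\<in>UNIV. c $ s *\<^sub>R ?col s)"
    unfolding frame_matrix_def coord_def matrix_vector_mult_def vec_eq_iff
    by (simp add: inner_sum_left mult.commute)
  also have "(\<Sum>s\<in>UNIV. c $ s *\<^sub>R ?col s) = (\<Sum>s\<in>UNIV <+> UNIV. c $ s *\<^sub>R ?col s)"
    by (simp only: UNIV_Plus_UNIV)
  also have "\<dots> = (\<Sum>i\<in>UNIV. c $ Inl i *\<^sub>R X i) + (\<Sum>i\<in>UNIV. c $ Inr i *\<^sub>R Y i)"
    by (subst sum.Plus) (simp_all add: o_def)
  finally show ?thesis .
qed

lemma frame_matrix_vector_eq_0: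
  assumes "frame_matrix X Y *v c = 0"
  shows "(\<Sum>i\<in>UNIV. c $ Inl i *\<^sub>R X i) = - (\<Sum>i\<in>UNIV. c $ Inr i *\<^sub>R Y i)"
  using coord_inj[of _ 0] assms unfolding frame_matrix_mult by (simp add: eq_neg_iff_add_eq_0)

lemma det_frame_matrix_nonzero:
  fixes X Y :: "'n::finite \<Rightarrow> 'n phase"
  assumes "span (range X) = L" "span (range Y) = W" "W \<inter> L = {0}"
    and "dim L = CARD('n)" "dim W = CARD('n)"
  shows "det (frame_matrix X Y) \<noteq> 0"
proof -
  have "c = 0" if Mc: "frame_matrix X Y *v c = 0" for c
  proof -
    let ?x = "\<Sum>i\<in>UNIV. c $ Inl i *\<^sub>R X i" and ?y = "\<Sum>i\<in>UNIV. c $ Inr i *\<^sub>R Y i"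
    have "?x \<in> L" unfolding assms(1)[symmetric] by (intro span_sum span_scale span_base) auto
    moreover have "?x \<in> W"
      unfolding frame_matrix_vector_eq_0[OF Mc] assms(2)[symmetric]
      by (intro span_neg span_sum span_scale span_base) auto
    ultimately have x0: "?x = 0" using assms(3) by blast
    then have y0: "?y = 0" using frame_matrix_vector_eq_0[OF Mc] by simp
    have "c $ Inl i = 0" for i
      by (rule independent_range_coeffs_zero[OF frame_inj_independent[OF assms(4,1)] x0])
    moreover have "c $ Inr i = 0" for i
      by (rule independent_range_coeffs_zero[OF frame_inj_independent[OF assms(5,2)] y0])
    ultimately show "c = 0" unfolding vec_eq_iff by (metis sum.exhaust zero_index)
  qed
  then have "inj ((*v) (frame_matrix X Y))"
    unfolding linear_injective_0[OF matrix_vector_mul_linear] by blast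
  then show ?thesis using det_nz_iff_inj[OF matrix_vector_mul_linear[of "frame_matrix X Y"]]
    by (simp add: matrix_of_matrix_vector_mul)
qed

definition cramer_solution :: "real^'m^'m \<Rightarrow> real^'m \<Rightarrow> real^'m" where
  "cramer_solution A b = (\<chi> q. det (\<chi> i j. if j = q then b $ i else A $ i $ j) / det A)"

lemma cramer_solution: "det A \<noteq> 0 \<Longrightarrow> A *v cramer_solution A b = b"
  using cramer[of A "cramer_solution A b" b] unfolding cramer_solution_def by simp

lemma Ck_cramer_solution:
  fixes A :: "real \<Rightarrow> real^'m::finite^'m"
  assumes "\<forall>t\<in>U. det (A t) \<noteq> 0" "\<And>i j. Ck k U (\<lambda>t. A t $ i $ j)"
  shows "Ck k U (\<lambda>t. cramer_solution (A t) b $ q)"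
proof -
  have "Ck k U (\<lambda>t. (\<chi> i j. if j = q then b $ i else A t $ i $ j) $ i $ j)" for i j
    by (cases "j = q") (simp_all add: Ck_const assms(2))
  then have "Ck k U (\<lambda>t. det (\<chi> i j. if j = q then b $ i else A t $ i $ j))" by (rule Ck_det)
  then show ?thesis
    unfolding cramer_solution_def using Ck_divide[OF assms(1) _ Ck_det[OF assms(2)]] by simp
qed

text \<open>When the frame matrix is invertible, every \<open>v\<close> splits uniquely as a vector of
  \<open>L = span (range X)\<close> minus a vector of \<open>W = span (range Y)\<close>; Cramer's rule gives
  the \<open>W\<close>-part explicitly.\<close>

definition frame_graph :: "('n::finite \<Rightarrow> 'n phase) \<Rightarrow> ('n \<Rightarrow> 'n phase) \<Rightarrow> 'n phase \<Rightarrow> 'n phase" where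
  "frame_graph X Y v = - (\<Sum>i\<in>UNIV. cramer_solution (frame_matrix X Y) (coord v) $ Inr i *\<^sub>R Y i)"

lemma frame_matrix_graph:
  fixes X Y :: "'n::finite \<Rightarrow> 'n phase" and v :: "'n phase"
  assumes "det (frame_matrix X Y) \<noteq> 0" "span (range X) = L" "span (range Y) = W"
  defines "w \<equiv> frame_graph X Y v"
  shows "w \<in> W" "v + w \<in> L" "\<And>w'. w' \<in> W \<Longrightarrow> v + w' \<in> L \<Longrightarrow> w' = w"
proof -
  let ?M = "frame_matrix X Y"
  let ?c = "cramer_solution ?M (coord v)"
  have inj: "inj ((*v) ?M)"
    using det_nz_iff_inj[OF matrix_vector_mul_linear[of ?M]] assms(1)
    by (simp add: matrix_of_matrix_vector_mul)
  show W: "w \<in> W" unfolding w_def frame_graph_def assms(3)[symmetric]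
    by (intro span_neg span_sum span_scale span_base) auto
  have "coord ((\<Sum>i\<in>UNIV. ?c $ Inl i *\<^sub>R X i) + (\<Sum>i\<in>UNIV. ?c $ Inr i *\<^sub>R Y i)) = coord v"
    using cramer_solution[OF assms(1)] unfolding frame_matrix_mult by metis
  then have "v + w = (\<Sum>i\<in>UNIV. ?c $ Inl i *\<^sub>R X i)"
    unfolding w_def frame_graph_def by (auto dest: coord_inj simp: algebra_simps)
  moreover have "(\<Sum>i\<in>UNIV. ?c $ Inl i *\<^sub>R X i) \<in> span (range X)"
    by (intro span_sum span_scale span_base) auto
  ultimately show L: "v + w \<in> L" using assms(2) by simp
  fix w' assume w': "w' \<in> W" "v + w' \<in> L"
  have "subspace L" "subspace W" using subspace_span unfolding assms(2,3)[symmetric] by blast+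
  then have "(v + w') - (v + w) \<in> span (range X)" "w' - w \<in> span (range Y)"
    using subspace_diff L W w' unfolding assms(2,3) by blast+
  then obtain a where a: "w' - w = (\<Sum>i\<in>UNIV. a i *\<^sub>R X i)" by (auto elim: span_range_sum)
  from \<open>w' - w \<in> span (range Y)\<close> obtain b where b: "w' - w = (\<Sum>i\<in>UNIV. b i *\<^sub>R Y i)" by (rule span_range_sum)
  define d :: "real^('n+'n)" where "d = (\<chi> s. case s of Inl i \<Rightarrow> a i | Inr i \<Rightarrow> - b i)"
  have "?M *v d = coord ((\<Sum>i\<in>UNIV. a i *\<^sub>R X i) - (\<Sum>i\<in>UNIV. b i *\<^sub>R Y i))"
    unfolding frame_matrix_mult d_def by (simp add: sum_negf)
  also have "\<dots> = 0" using a b by simp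
  finally have "d = 0" using inj linear_injective_0[OF matrix_vector_mul_linear[of ?M]] by simp
  then have "a i = 0" for i unfolding d_def vec_eq_iff by (metis sum.case(1) vec_lambda_beta zero_index)
  then show "w' = w" using a by simp
qed

locale graph_chart =
  fixes W :: "'n::finite phase set" and l :: "real \<Rightarrow> 'n phase set" and U :: "real set" and k :: nat
  assumes open_U: "open U"
    and lagrangian_W: "lagrangian W"
    and lagrangian_l: "\<And>t. t \<in> U \<Longrightarrow> lagrangian (l t)"
    and graph_unique: "\<And>t v. t \<in> U \<Longrightarrow> \<exists>!w. w \<in> W \<and> v + w \<in> l t"
    and smooth: "\<And>u v. Ck k U (\<lambda>t. omega u (graph_map W l t v))"
begin

lemma graph_map:
  assumes "t \<in> U"
  shows "graph_map W l t v \<in> W" "v + graph_map W l t v \<in> l t"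
  using theI'[OF graph_unique[OF assms, of v]] unfolding graph_map_def by blast+

lemma graph_map_eqI: "t \<in> U \<Longrightarrow> w \<in> W \<Longrightarrow> v + w \<in> l t \<Longrightarrow> graph_map W l t v = w"
  unfolding graph_map_def by (rule the1_equality[OF graph_unique]) auto

lemma linear_graph_map:
  assumes "t \<in> U"
  shows "linear (graph_map W l t)"
proof -
  have W: "subspace W" and L: "subspace (l t)"
    using lagrangian_W lagrangian_l[OF assms] by (simp_all add: lagrangian_subspace)
  show ?thesis unfolding linear_iff
  proof (intro allI conjI)
    fix x y
    have eq: "(x + y) + (graph_map W l t x + graph_map W l t y)
        = (x + graph_map W l t x) + (y + graph_map W l t y)" by (simp add: algebra_simps)
    have "(x + y) + (graph_map W l t x + graph_map W l t y) \<in> l t"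
      unfolding eq by (rule subspace_add[OF L graph_map(2)[OF assms] graph_map(2)[OF assms]])
    moreover have "graph_map W l t x + graph_map W l t y \<in> W"
      using subspace_add[OF W graph_map(1)[OF assms] graph_map(1)[OF assms]] .
    ultimately show "graph_map W l t (x + y) = graph_map W l t x + graph_map W l t y"
      by (intro graph_map_eqI[OF assms])
  next
    fix c x
    have "c *\<^sub>R x + c *\<^sub>R graph_map W l t x \<in> l t"
      using subspace_scale[OF L graph_map(2)[OF assms]] by (simp add: scaleR_add_right)
    moreover have "c *\<^sub>R graph_map W l t x \<in> W" using subspace_scale[OF W graph_map(1)[OF assms]] .
    ultimately show "graph_map W l t (c *\<^sub>R x) = c *\<^sub>R graph_map W l t x"
      by (intro graph_map_eqI[OF assms])
  qed
qed

lemma graph_map_eq_0: "t \<in> U \<Longrightarrow> v \<in> l t \<Longrightarrow> graph_map W l t v = 0"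
  using subspace_0[OF lagrangian_subspace[OF lagrangian_W]] by (intro graph_map_eqI) auto

text \<open>Expand \<open>\<omega>(u + A u, v + A v) = 0\<close>, using that \<open>l t0\<close>, \<open>l t\<close> and \<open>W\<close> are Lagrangian.\<close>

lemma graph_map_symmetric:
  assumes "t0 \<in> U" "t \<in> U" "u \<in> l t0" "v \<in> l t0"
  shows "omega u (graph_map W l t v) = omega v (graph_map W l t u)"
proof -
  let ?A = "graph_map W l t"
  have "omega (u + ?A u) (v + ?A v) = 0"
    using lagrangian_l[OF assms(2)] graph_map(2)[OF assms(2)] unfolding lagrangian_def by blast
  moreover have "omega u v = 0" using lagrangian_l[OF assms(1)] assms(3,4) unfolding lagrangian_def by blast
  moreover have "omega (?A u) (?A v) = 0"
    using lagrangian_W graph_map(1)[OF assms(2)] unfolding lagrangian_def by blast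
  moreover have "omega (?A u) v = - omega v (?A u)" by (rule omega_antisym)
  ultimately show ?thesis
    by (simp add: bilinear_ladd[OF bilinear_omega] bilinear_radd[OF bilinear_omega])
qed

end

lemma frame_matrix_Ck:
  assumes "\<forall>i. \<forall>e\<in>(Basis :: 'n::finite phase set). Ck_on k {a..b} (\<lambda>t. X t i \<bullet> e)"
  shows "Ck k {a<..<b} (\<lambda>t. frame_matrix (X t) Y $ r $ s)"
proof (cases s)
  case (Inl i)
  have "Ck_on k {a..b} (\<lambda>t. X t i \<bullet> phase_basis r)" using assms phase_basis_in_Basis by blast
  then show ?thesis using Inl Ck_on_imp_Ck unfolding frame_matrix_def by simp
next
  case (Inr i)
  then show ?thesis unfolding frame_matrix_def by (simp add: Ck_const)
qed

lemma Ck_omega_frame_graph: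
  assumes "\<forall>t\<in>U. det (frame_matrix (X t) Y) \<noteq> 0" "\<And>r s. Ck k U (\<lambda>t. frame_matrix (X t) Y $ r $ s)"
  shows "Ck k U (\<lambda>t. omega u (frame_graph (X t) Y v))"
proof -
  have "omega u (frame_graph (X t) Y v)
      = - (\<Sum>i\<in>UNIV. cramer_solution (frame_matrix (X t) Y) (coord v) $ Inr i * omega u (Y i))" for t
    unfolding frame_graph_def
    by (simp add: linear_neg[OF linear_omega_right] linear_sum[OF linear_omega_right]
        linear_scale[OF linear_omega_right])
  moreover have "Ck k U (\<lambda>t. - (\<Sum>i\<in>UNIV. cramer_solution (frame_matrix (X t) Y) (coord v) $ Inr i * omega u (Y i)))"
    by (intro Ck_uminus Ck_sum Ck_mult Ck_cramer_solution[OF assms] Ck_const) auto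
  ultimately show ?thesis by simp
qed

lemma graph_chart_of_frames:
  assumes "open U" "lagrangian W" "span (range Y) = W"
    and frames: "\<And>t. t \<in> U \<Longrightarrow> lagrangian (l t) \<and> span (range (X t)) = l t \<and> det (frame_matrix (X t) Y) \<noteq> 0"
    and "\<And>r s. Ck k U (\<lambda>t. frame_matrix (X t) Y $ r $ s)"
  shows "graph_chart W l U k"
proof
  show "open U" "lagrangian W" by fact+
  fix t assume "t \<in> U"
  note fg = frame_matrix_graph[OF _ _ assms(3)] frames[OF \<open>t \<in> U\<close>]
  show "lagrangian (l t)" using fg by blast
  show "\<exists>!w. w \<in> W \<and> v + w \<in> l t" for v using fg by metis
next
  have graph_eq: "graph_map W l t v = frame_graph (X t) Y v" if "t \<in> U" for t v
    using frame_matrix_graph[OF _ _ assms(3), where v = v] frames[OF that]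
    unfolding graph_map_def by (intro the_equality) blast+
  have Ck_frame: "Ck k U (\<lambda>t. omega u (frame_graph (X t) Y v))" for u v
    using frames assms(5) by (intro Ck_omega_frame_graph) auto
  show "Ck k U (\<lambda>t. omega u (graph_map W l t v))" for u v
    by (rule Ck_cong[OF assms(1) _ Ck_frame[of u v]]) (simp add: graph_eq)
qed

text \<open>Near \<open>t0\<close> the frame matrix built from the frame of \<open>l t\<close> and a fixed frame of \<open>W\<close>
  stays invertible, since its determinant is continuous and nonzero at \<open>t0\<close> by transversality.\<close>

lemma graph_chart_exists:
  fixes l :: "real \<Rightarrow> 'n::finite phase set"
  assumes "lagr_path_Ck k a b l" "t0 \<in> {a<..<b}" "lagrangian W" "W \<inter> l t0 = {0}"
  obtains U where "t0 \<in> U" "graph_chart W l U k"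
proof -
  obtain X :: "real \<Rightarrow> 'n \<Rightarrow> 'n phase" where lag: "\<forall>t\<in>{a..b}. lagrangian (l t)"
    and X: "\<forall>t\<in>{a..b}. l t = span (range (X t))"
    and XCk: "\<forall>i. \<forall>e\<in>(Basis :: 'n phase set). Ck_on k {a..b} (\<lambda>t. X t i \<bullet> e)"
    using assms(1) unfolding lagr_path_Ck_def by blast
  obtain Y :: "'n \<Rightarrow> 'n phase" where Y: "span (range Y) = W"
    using frame_exists assms(3) unfolding lagrangian_def by blast
  let ?d = "\<lambda>t. det (frame_matrix (X t) Y)"
  have MCk: "Ck k {a<..<b} (\<lambda>t. frame_matrix (X t) Y $ r $ s)" for r s
    by (rule frame_matrix_Ck[OF XCk])
  define U where "U = ?d -` (- {0}) \<inter> {a<..<b}"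
  have "t0 \<in> {a..b}" using assms(2) by simp
  then have "?d t0 \<noteq> 0"
    using det_frame_matrix_nonzero[OF X[rule_format, symmetric] Y assms(4)] lag assms(3)
    unfolding lagrangian_def by blast
  then have "t0 \<in> U" unfolding U_def using assms(2) by simp
  moreover have "graph_chart W l U k"
  proof (rule graph_chart_of_frames[OF _ assms(3) Y])
    have "continuous_on {a<..<b} ?d" by (rule Ck_cont[OF Ck_det[OF MCk]])
    then show "open U" unfolding U_def
      using continuous_on_open_vimage[of "{a<..<b}" ?d] by (simp add: open_Compl)
    show "lagrangian (l t) \<and> span (range (X t)) = l t \<and> ?d t \<noteq> 0" if "t \<in> U" for t
      using that lag X unfolding U_def by auto
    show "Ck k U (\<lambda>t. frame_matrix (X t) Y $ r $ s)" for r s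
      using Ck_subset[OF _ MCk] unfolding U_def by blast
  qed
  ultimately show ?thesis using that by blast
qed

section \<open>Crossing forms\<close>

definition crossing_bilin :: "'n::finite phase set \<Rightarrow> (real \<Rightarrow> 'n phase set) \<Rightarrow> real \<Rightarrow> nat \<Rightarrow> 'n phase \<Rightarrow> 'n phase \<Rightarrow> real" where
  "crossing_bilin W l t0 i u v = (deriv ^^ i) (\<lambda>t. omega u (graph_map W l t v)) t0"

lemma crossing_form_eq: "crossing_form W l t0 i v = crossing_bilin W l t0 i v v"
  unfolding crossing_form_def crossing_bilin_def ..

lemma scaled_error_bound:
  fixes a b c m x N :: real
  assumes "c \<noteq> 0" "m > 0" "x > 0" "N \<ge> 0" "\<bar>a - c * b\<bar> \<le> N * (\<bar>c\<bar> * m / (N + 1)) * x"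
  shows "\<bar>a / c - b\<bar> < m * x"
proof -
  have "\<bar>a / c - b\<bar> = \<bar>a - c * b\<bar> / \<bar>c\<bar>" using assms(1) by (simp add: field_simps abs_divide)
  also have "\<dots> \<le> N * m * x / (N + 1)" using assms(1,4,5) by (simp add: divide_le_eq field_simps)
  also have "\<dots> < m * x" using assms(2-4) by (simp add: divide_less_eq)
  finally show ?thesis .
qed

context graph_chart
begin

lemma bilinear_crossing_bilin:
  assumes "t0 \<in> U" "i \<le> k"
  shows "bilinear (crossing_bilin W l t0 i)"
  unfolding bilinear_def crossing_bilin_def
proof (intro allI conjI)
  fix u
  show "linear (\<lambda>v. (deriv ^^ i) (\<lambda>t. omega u (graph_map W l t v)) t0)"
    using linear_compose[OF linear_graph_map linear_omega_right, unfolded o_def]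
    by (intro higher_deriv_linear_family[OF open_U assms(1) smooth assms(2)]) blast
next
  fix v
  show "linear (\<lambda>u. (deriv ^^ i) (\<lambda>t. omega u (graph_map W l t v)) t0)"
    using linear_omega_left by (intro higher_deriv_linear_family[OF open_U assms(1) smooth assms(2)]) blast
qed

lemma crossing_bilin_symmetric:
  assumes "t0 \<in> U" "u \<in> l t0" "v \<in> l t0"
  shows "crossing_bilin W l t0 i u v = crossing_bilin W l t0 i v u"
  unfolding crossing_bilin_def
  by (rule higher_deriv_cong_open[OF open_U _ assms(1)]) (use graph_map_symmetric assms in blast)

lemma crossing_bilin_0:
  assumes "t0 \<in> U" "v \<in> l t0"
  shows "crossing_bilin W l t0 0 u v = 0"
  unfolding crossing_bilin_def using graph_map_eq_0[OF assms] linear_0[OF linear_omega_right] by simp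

lemma crossing_bilin_below_order:
  assumes "t0 \<in> U" "subspace Ls" "j \<le> k"
    and "\<forall>i\<in>{1..<j}. \<forall>v\<in>l t0 \<inter> Ls. crossing_form W l t0 i v = 0"
    and "i < j" "u \<in> l t0 \<inter> Ls" "v \<in> l t0 \<inter> Ls"
  shows "crossing_bilin W l t0 i u v = 0"
proof (cases "i = 0")
  case True
  have "v \<in> l t0" using assms(7) by blast
  then show ?thesis using crossing_bilin_0[OF assms(1)] True by blast
next
  case False
  have "subspace (l t0 \<inter> Ls)"
    using lagrangian_subspace[OF lagrangian_l[OF assms(1)]] assms(2) by (rule subspace_inter)
  then show ?thesis
  proof (rule symmetric_bilinear_eq_0_of_quadratic_eq_0)
    show "bilinear (crossing_bilin W l t0 i)"
      by (rule bilinear_crossing_bilin[OF assms(1)]) (use assms(3,5) in simp)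
    show "crossing_bilin W l t0 i u' w' = crossing_bilin W l t0 i w' u'"
      if "u' \<in> l t0 \<inter> Ls" "w' \<in> l t0 \<inter> Ls" for u' w'
      using crossing_bilin_symmetric[OF assms(1)] that by blast
    show "crossing_bilin W l t0 i v' v' = 0" if "v' \<in> l t0 \<inter> Ls" for v'
      using assms(4) assms(5) False that unfolding crossing_form_eq by simp
  qed (fact assms(6), fact assms(7))
qed

lemma crossing_order_pos:
  assumes "t0 \<in> U" "subspace Ls" "l t0 \<inter> Ls \<noteq> {0}"
    and "qf_nondegenerate (crossing_form W l t0 j) (l t0 \<inter> Ls)"
  shows "j \<noteq> 0"
proof
  assume "j = 0"
  then have zero: "crossing_form W l t0 j v = 0" if "v \<in> l t0" for v
    using crossing_bilin_0[OF assms(1) that] by (simp add: crossing_form_eq)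
  have sub: "subspace (l t0 \<inter> Ls)"
    using lagrangian_subspace[OF lagrangian_l[OF assms(1)]] assms(2) by (rule subspace_inter)
  have "qf_bilin (crossing_form W l t0 j) u w = 0" if "u \<in> l t0 \<inter> Ls" "w \<in> l t0 \<inter> Ls" for u w
  proof -
    have "u + w \<in> l t0 \<inter> Ls" using subspace_add[OF sub that] .
    then show ?thesis using zero that unfolding qf_bilin_def by simp
  qed
  then have "\<forall>u\<in>l t0 \<inter> Ls. u = 0" using assms(4) unfolding qf_nondegenerate_def by blast
  then show False using assms(3) subspace_0[OF sub] by blast
qed

lemma inner_crossing_op:
  assumes "t \<in> U" "subspace (l t0 \<inter> Ls)" "u \<in> l t0 \<inter> Ls" "w \<in> l t0 \<inter> Ls"
  shows "u \<bullet> crossing_op W l Ls t0 t w = omega u (graph_map W l t w)"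
  unfolding crossing_op_def omega_def
  using orth_proj_properties(3,4)[OF assms(2)] assms(3,4) by simp

lemma op_signature_crossing_op:
  assumes "t0 \<in> U" "t \<in> U" "subspace (l t0 \<inter> Ls)"
  shows "op_signature (crossing_op W l Ls t0 t)
       = qf_signature (\<lambda>v. v \<bullet> crossing_op W l Ls t0 t v) (l t0 \<inter> Ls)"
proof (rule op_signature_eq_qf_signature[OF _ assms(3)])
  show "linear (crossing_op W l Ls t0 t)"
    using linear_compose[OF linear_compose[OF linear_compose[OF orth_proj_properties(1)[OF assms(3)]
          linear_graph_map[OF assms(2)]] linear_symJ] orth_proj_properties(1)[OF assms(3)]]
    unfolding crossing_op_def o_def .
  show "\<forall>x. crossing_op W l Ls t0 t x \<in> l t0 \<inter> Ls"
    unfolding crossing_op_def using orth_proj_properties(2)[OF assms(3)] by blast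
  show "\<forall>u\<in>l t0 \<inter> Ls. \<forall>w\<in>l t0 \<inter> Ls. u \<bullet> crossing_op W l Ls t0 t w = w \<bullet> crossing_op W l Ls t0 t u"
    using inner_crossing_op[OF assms(2,3)] graph_map_symmetric[OF assms(1,2)] by simp
qed

lemma crossing_bilin_taylor:
  assumes "t0 \<in> U" "1 \<le> j" "j \<le> k" "\<And>i. i < j \<Longrightarrow> crossing_bilin W l t0 i u v = 0" "\<epsilon> > 0"
  shows "\<forall>\<^sub>F t in nhds t0. \<bar>omega u (graph_map W l t v) - crossing_bilin W l t0 j u v / fact j * (t - t0) ^ j\<bar>
           \<le> \<epsilon> * \<bar>t - t0\<bar> ^ j"
  using taylor_bound[OF open_U assms(1) Ck_mono_le[OF assms(3) smooth] assms(2) _ assms(5)] assms(4)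
  unfolding crossing_bilin_def by blast

text \<open>The Taylor estimate on the entries in an orthonormal basis of \<open>l t0 \<inter> Ls\<close> becomes uniform by
  \<open>bilinear_onb_diff_bound\<close>: after division by \<open>c = (t - t0)\<^sup>j / j!\<close>, the quadratic form
  \<open>\<omega>(v, A(t) v)\<close> is \<open>m\<close>-close to \<open>\<beta> v v\<close> relative to \<open>|v|\<^sup>2\<close>.\<close>

lemma crossing_quadratic_close:
  fixes \<beta> :: "'n phase \<Rightarrow> 'n phase \<Rightarrow> real"
  assumes "t \<in> U" "t \<noteq> t0" "subspace (l t0 \<inter> Ls)" "onb E (l t0 \<inter> Ls)" "bilinear \<beta>" "m > 0"
    and entries: "\<forall>p\<in>E. \<forall>q\<in>E.
       \<bar>omega p (graph_map W l t q) - \<beta> p q / fact j * (t - t0) ^ j\<bar>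
         \<le> m / (fact j * (real (card E) ^ 2 + 1)) * \<bar>t - t0\<bar> ^ j"
    and "v \<in> l t0 \<inter> Ls" "v \<noteq> 0"
  shows "\<bar>inverse ((t - t0) ^ j / fact j) * (v \<bullet> crossing_op W l Ls t0 t v) - \<beta> v v\<bar> < m * (v \<bullet> v)"
proof -
  define c where "c = (t - t0) ^ j / fact j"
  let ?N = "real (card E) ^ 2"
  have c: "c \<noteq> 0" "\<bar>c\<bar> = \<bar>t - t0\<bar> ^ j / fact j" using assms(2) unfolding c_def by (simp_all add: power_abs)
  have bil: "bilinear (\<lambda>u w. omega u (graph_map W l t w))"
    using linear_compose[OF linear_graph_map[OF assms(1)] linear_omega_right, unfolded o_def]
      linear_omega_left unfolding bilinear_def by blast
  have "\<bar>omega v (graph_map W l t v) - c * \<beta> v v\<bar>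
      \<le> ?N * (m / (fact j * (?N + 1)) * \<bar>t - t0\<bar> ^ j) * (v \<bullet> v)"
    using entries unfolding c_def
    by (intro bilinear_onb_diff_bound[OF assms(4) bil _ assms(8)] bilinear_scale[OF assms(5)])
       (simp add: field_simps)
  also have "\<dots> = ?N * (\<bar>c\<bar> * m / (?N + 1)) * (v \<bullet> v)" unfolding c by (simp add: field_simps)
  finally have bound: "\<bar>omega v (graph_map W l t v) - c * \<beta> v v\<bar>
      \<le> ?N * (\<bar>c\<bar> * m / (?N + 1)) * (v \<bullet> v)" .
  have "\<bar>omega v (graph_map W l t v) / c - \<beta> v v\<bar> < m * (v \<bullet> v)"
    by (rule scaled_error_bound[OF c(1) assms(6) _ _ bound]) (use assms(9) in simp_all)
  then show ?thesis
    using inner_crossing_op[OF assms(1,3,8,8)] by (simp add: c_def divide_inverse mult.commute)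
qed

lemma crossing_entries_eventually:
  assumes "t0 \<in> U" "1 \<le> j" "j \<le> k" "finite E" "E \<subseteq> l t0 \<inter> Ls" "\<epsilon> > 0"
    and lower: "\<forall>i<j. \<forall>u\<in>l t0 \<inter> Ls. \<forall>v\<in>l t0 \<inter> Ls. crossing_bilin W l t0 i u v = 0"
  obtains d where "d > 0" "\<And>t. \<bar>t - t0\<bar> < d \<Longrightarrow> t \<in> U \<and> (\<forall>p\<in>E. \<forall>q\<in>E.
      \<bar>omega p (graph_map W l t q) - crossing_bilin W l t0 j p q / fact j * (t - t0) ^ j\<bar>
        \<le> \<epsilon> * \<bar>t - t0\<bar> ^ j)"
proof -
  have "\<forall>\<^sub>F t in nhds t0. \<forall>p\<in>E. \<forall>q\<in>E.
      \<bar>omega p (graph_map W l t q) - crossing_bilin W l t0 j p q / fact j * (t - t0) ^ j\<bar>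
        \<le> \<epsilon> * \<bar>t - t0\<bar> ^ j"
    using assms(4,5) lower
    by (intro eventually_ball_finite ballI crossing_bilin_taylor[OF assms(1-3) _ assms(6)]) blast+
  moreover have "\<forall>\<^sub>F t in nhds t0. t \<in> U" by (rule eventually_nhds_in_open[OF open_U assms(1)])
  ultimately have "\<forall>\<^sub>F t in nhds t0. t \<in> U \<and> (\<forall>p\<in>E. \<forall>q\<in>E.
      \<bar>omega p (graph_map W l t q) - crossing_bilin W l t0 j p q / fact j * (t - t0) ^ j\<bar>
        \<le> \<epsilon> * \<bar>t - t0\<bar> ^ j)"
    by (rule eventually_conj[rotated])
  then show ?thesis using that unfolding eventually_nhds_metric dist_real_def by blast
qed

lemma op_signature_crossing_op_rescaled:
  assumes "t0 \<in> U" "t \<in> U" "t \<noteq> t0" "subspace (l t0 \<inter> Ls)"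
    and "qf_signature (\<lambda>v. inverse ((t - t0) ^ j / fact j) * (v \<bullet> crossing_op W l Ls t0 t v))
           (l t0 \<inter> Ls) = S"
  shows "op_signature (crossing_op W l Ls t0 t) = (if (t - t0) ^ j > 0 then S else - S)"
proof -
  let ?c = "(t - t0) ^ j / fact j"
  have "?c \<noteq> 0" "inverse ?c > 0 \<longleftrightarrow> (t - t0) ^ j > 0"
    using assms(3) by (simp_all add: zero_less_divide_iff)
  then show ?thesis
    using qf_signature_scale[of "inverse ?c" "\<lambda>v. v \<bullet> crossing_op W l Ls t0 t v" "l t0 \<inter> Ls"]
      op_signature_crossing_op[OF assms(1,2,4)] assms(5)
    by (auto split: if_splits)
qed

lemma crossing_op_signature_near:
  assumes "t0 \<in> U" "subspace Ls" "1 \<le> j" "j \<le> k"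
    and lower: "\<forall>i<j. \<forall>u\<in>l t0 \<inter> Ls. \<forall>v\<in>l t0 \<inter> Ls. crossing_bilin W l t0 i u v = 0"
    and nondeg: "qf_nondegenerate (crossing_form W l t0 j) (l t0 \<inter> Ls)"
  obtains d where "d > 0" "\<And>t. 0 < \<bar>t - t0\<bar> \<Longrightarrow> \<bar>t - t0\<bar> < d \<Longrightarrow>
      op_signature (crossing_op W l Ls t0 t)
        = (if (t - t0) ^ j > 0 then qf_signature (crossing_form W l t0 j) (l t0 \<inter> Ls)
           else - qf_signature (crossing_form W l t0 j) (l t0 \<inter> Ls))"
proof -
  let ?V = "l t0 \<inter> Ls" and ?\<beta> = "crossing_bilin W l t0 j"
  have subV: "subspace ?V"
    using lagrangian_subspace[OF lagrangian_l[OF assms(1)]] assms(2) by (rule subspace_inter)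
  have bil: "bilinear ?\<beta>" by (rule bilinear_crossing_bilin[OF assms(1,4)])
  have form: "crossing_form W l t0 j = (\<lambda>v. ?\<beta> v v)" unfolding crossing_form_eq[abs_def] ..
  obtain m where m: "m > 0" and stable: "\<And>q. \<forall>v\<in>?V. v \<noteq> 0 \<longrightarrow> \<bar>q v - ?\<beta> v v\<bar> < m * (v \<bullet> v) \<Longrightarrow>
      qf_signature q ?V = qf_signature (crossing_form W l t0 j) ?V"
    using qf_signature_perturbation[OF subV bil crossing_bilin_symmetric[OF assms(1)]] nondeg
    unfolding form by blast
  obtain E where E: "onb E ?V" using onb_exists[OF subV] by blast
  have "m / (fact j * (real (card E) ^ 2 + 1)) > 0" using m by (simp add: add_nonneg_pos)
  then obtain d where "d > 0" and near: "\<And>t. \<bar>t - t0\<bar> < d \<Longrightarrow> t \<in> U \<and> (\<forall>p\<in>E. \<forall>q\<in>E.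
      \<bar>omega p (graph_map W l t q) - ?\<beta> p q / fact j * (t - t0) ^ j\<bar>
        \<le> m / (fact j * (real (card E) ^ 2 + 1)) * \<bar>t - t0\<bar> ^ j)"
    using crossing_entries_eventually[OF assms(1,3,4) onbD(1,2)[OF E] _ lower] by blast
  moreover have "op_signature (crossing_op W l Ls t0 t)
      = (if (t - t0) ^ j > 0 then qf_signature (crossing_form W l t0 j) ?V
         else - qf_signature (crossing_form W l t0 j) ?V)"
    if t: "0 < \<bar>t - t0\<bar>" "\<bar>t - t0\<bar> < d" for t
  proof (rule op_signature_crossing_op_rescaled[OF assms(1) _ _ subV])
    show "t \<in> U" "t \<noteq> t0" using near[OF t(2)] t(1) by auto
    then show "qf_signature (\<lambda>v. inverse ((t - t0) ^ j / fact j) * (v \<bullet> crossing_op W l Ls t0 t v)) ?V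
        = qf_signature (crossing_form W l t0 j) ?V"
      using crossing_quadratic_close[OF _ _ subV E bil m] near[OF t(2)] by (intro stable) blast
  qed
  ultimately show ?thesis using that by blast
qed

end

lemma maslov_local_of_signatures:
  assumes sig: "\<And>t. 0 < \<bar>t - t0\<bar> \<Longrightarrow> \<bar>t - t0\<bar> < d \<Longrightarrow>
      op_signature (crossing_op W l Ls t0 t) = (if (t - t0) ^ j > 0 then S else - S)"
    and "0 < \<delta>" "\<delta> < d"
  shows "(even j \<longrightarrow> maslov_local W l Ls t0 \<delta> = 0) \<and>
         (odd j \<longrightarrow> maslov_local W l Ls t0 \<delta> = real_of_int S)"
proof -
  have "op_signature (crossing_op W l Ls t0 (t0 + \<delta>)) = S" using sig[of "t0 + \<delta>"] assms(2,3) by simp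
  moreover have "op_signature (crossing_op W l Ls t0 (t0 - \<delta>)) = (if even j then S else - S)"
    using sig[of "t0 - \<delta>"] assms(2,3)
    by (cases "even j") (simp_all add: power_minus_even power_minus_odd)
  ultimately show ?thesis unfolding maslov_local_def by simp
qed

theorem theorem2:
  fixes l :: "real \<Rightarrow> 'n::finite phase set"
    and Ls W :: "'n phase set"
    and a b t0 :: real
    and k j :: nat
  assumes "a < b"
    and "lagr_path_Ck k a b l"
    and "lagrangian Ls"
    and "j \<le> k"
    and "t0 \<in> {a<..<b}"
    and "isolated_crossing l Ls t0"
    and "lagrangian W" and "W \<inter> l t0 = {0}"
    and "\<forall>i\<in>{1..<j}. \<forall>v\<in>l t0 \<inter> Ls. crossing_form W l t0 i v = 0"
    and "qf_nondegenerate (crossing_form W l t0 j) (l t0 \<inter> Ls)"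
  shows "\<exists>\<delta>>0. \<forall>\<delta>'. 0 < \<delta>' \<and> \<delta>' \<le> \<delta> \<longrightarrow>
           (even j \<longrightarrow> maslov_local W l Ls t0 \<delta>' = 0) \<and>
           (odd j \<longrightarrow> maslov_local W l Ls t0 \<delta>' =
                       real_of_int (qf_signature (crossing_form W l t0 j) (l t0 \<inter> Ls)))"
proof -
  obtain U where t0: "t0 \<in> U" and chart: "graph_chart W l U k"
    using graph_chart_exists[OF assms(2,5,7,8)] .
  interpret graph_chart W l U k by (rule chart)
  have Ls: "subspace Ls" using assms(3) by (rule lagrangian_subspace)
  have "j \<noteq> 0"
    using crossing_order_pos[OF t0 Ls _ assms(10)] assms(6) unfolding isolated_crossing_def by blast
  moreover have "\<forall>i<j. \<forall>u\<in>l t0 \<inter> Ls. \<forall>v\<in>l t0 \<inter> Ls. crossing_bilin W l t0 i u v = 0"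
    using crossing_bilin_below_order[OF t0 Ls assms(4,9)] by blast
  ultimately obtain d where "d > 0" and sig: "\<And>t. 0 < \<bar>t - t0\<bar> \<Longrightarrow> \<bar>t - t0\<bar> < d \<Longrightarrow>
      op_signature (crossing_op W l Ls t0 t)
        = (if (t - t0) ^ j > 0 then qf_signature (crossing_form W l t0 j) (l t0 \<inter> Ls)
           else - qf_signature (crossing_form W l t0 j) (l t0 \<inter> Ls))"
    using crossing_op_signature_near[OF t0 Ls _ assms(4) _ assms(10)] by (metis One_nat_def Suc_leI not_gr_zero)
  then show ?thesis
    by (intro exI[of _ "d / 2"] conjI allI impI maslov_local_of_signatures[OF sig]) auto
qed

end
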